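(* Suppose $0<q<1$ and let $(r_m/s_m)_{m\in\mathbb N}$ be a convergent sequence of rational numbers. (1) If $r_m/s_m$ converges to an irrational number $t$, then the sequence $([r_m/s_m]^\sharp_q)_m$ converges to a limit which depends only on $t$. (2) If $r_m/s_m$ converges to a rational number $r/s$ from the right, then $[r_m/s_m]^\sharp_q\to[r/s]^\sharp_q$. (3) If $r_m/s_m$ converges to a rational number $r/s$ from the left, then $[r_m/s_m]^\sharp_q\to[r/s]^\flat_q$.
   Context: Let $\sigma_{1,q}=\begin{bmatrix}q^{-1}&-q^{-1}\\0&1\end{bmatrix}$ and $\sigma_{2,q}=\begin{bmatrix}1&0\\1&q^{-1}\end{bmatrix}$ in $\mathrm{PSL}_2(\mathbb R)$, acting on $\mathbb R\cup\{\infty\}$ by fractional linear transformations $\begin{bmatrix}a&b\\c&d\end{bmatrix}z=\frac{az+b}{cz+d}$; $\sigma_i\mapsto\sigma_{i,q}$ defines a homomorphism from the braid group $B_3=\langle\sigma_1,\sigma_2\mid\sigma_1\sigma_2\sigma_1=\sigma_2\sigma_1\sigma_2\rangle$. Every nonzero finite rational $r/s$ has a unique expansion $r/s=[a_1,\dots,a_{2n}]=a_1+\cfrac{1}{a_2+\cfrac{1}{\ddots+\cfrac1{a_{2n}}}}$ with either $a_1\ge0$, $a_2,\dots,a_{2n}\ge1$, or $a_1\le0$, $a_2,\dots,a_{2n}\le-1$ (integers); $0$ has expansion $[-1,1]$ and $\infty$ the empty expansion. For such $\mathbf a$ let $\beta_{\mathbf a}=\sigma_1^{-a_1}\sigma_2^{a_2}\cdots\sigma_1^{-a_{2n-1}}\sigma_2^{a_{2n}}$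 and $\beta_{\mathbf a,q}$ its image in $\mathrm{PSL}_2(\mathbb R)$. The right $q$-deformed rational is $[r/s]^\sharp_q=\beta_{\mathbf a,q}(\infty)$ and the left $q$-deformed rational is $[r/s]^\flat_q=\beta_{\mathbf a,q}(1/(1-q))$. *)

theory Defs
  imports Complex_Main
begin

fun cf_eval :: "int list \<Rightarrow> rat" where
  "cf_eval [] = 0"
| "cf_eval [a] = of_int a"
| "cf_eval (a # as) = of_int a + 1 / cf_eval as"

definition cf_valid :: "int list \<Rightarrow> bool" where
  "cf_valid as \<longleftrightarrow> as \<noteq> [] \<and> even (length as) \<and>
     ((hd as \<ge> 0 \<and> (\<forall>b\<in>set (tl as). b \<ge> 1)) \<or>
      (hd as \<le> 0 \<and> (\<forall>b\<in>set (tl as). b \<le> -1)))"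

definition cf_expansion :: "rat \<Rightarrow> int list" where
  "cf_expansion x = (if x = 0 then [-1, 1] else (THE as. cf_valid as \<and> cf_eval as = x))"

type_synonym mat2 = "real \<times> real \<times> real \<times> real"  \<comment> \<open>(a,b,c,d) = [[a,b],[c,d]]\<close>

definition mat2_mult :: "mat2 \<Rightarrow> mat2 \<Rightarrow> mat2" where
  "mat2_mult M N = (case M of (a,b,c,d) \<Rightarrow> case N of (e,f,g,h) \<Rightarrow>
      (a*e + b*g, a*f + b*h, c*e + d*g, c*f + d*h))"

definition mat2_id :: mat2 where "mat2_id = (1,0,0,1)"

text \<open>Adjugate: a scalar multiple of the inverse, hence the inverse in PGL_2 / PSL_2.\<close>
definition mat2_adj :: "mat2 \<Rightarrow> mat2" where
  "mat2_adj M = (case M of (a,b,c,d) \<Rightarrow> (d, -b, -c, a))"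

fun mat2_npow :: "mat2 \<Rightarrow> nat \<Rightarrow> mat2" where
  "mat2_npow M 0 = mat2_id"
| "mat2_npow M (Suc n) = mat2_mult M (mat2_npow M n)"

definition mat2_ipow :: "mat2 \<Rightarrow> int \<Rightarrow> mat2" where
  "mat2_ipow M k = (if k \<ge> 0 then mat2_npow M (nat k) else mat2_npow (mat2_adj M) (nat (-k)))"

definition sigma1 :: "real \<Rightarrow> mat2" where
  "sigma1 q = (1/q, -1/q, 0, 1)"

definition sigma2 :: "real \<Rightarrow> mat2" where
  "sigma2 q = (1, 0, 1, 1/q)"

fun beta :: "real \<Rightarrow> int list \<Rightarrow> mat2" where
  "beta q (a1 # a2 # rest) =
     mat2_mult (mat2_ipow (sigma1 q) (-a1)) (mat2_mult (mat2_ipow (sigma2 q) a2) (beta q rest))"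
| "beta q _ = mat2_id"

definition mat2_act_hom :: "mat2 \<Rightarrow> real \<Rightarrow> real \<Rightarrow> real" where
  "mat2_act_hom M x y = (case M of (a,b,c,d) \<Rightarrow> (a*x + b*y) / (c*x + d*y))"

text \<open>Right q-deformed rational: beta_{a,q}(\<infinity>), \<infinity> = (1 : 0).\<close>
definition qrat_sharp :: "real \<Rightarrow> rat \<Rightarrow> real" where
  "qrat_sharp q x = mat2_act_hom (beta q (cf_expansion x)) 1 0"

text \<open>Left q-deformed rational: beta_{a,q}(1/(1-q)), 1/(1-q) = (1 : 1-q).\<close>
definition qrat_flat :: "real \<Rightarrow> rat \<Rightarrow> real" where
  "qrat_flat q x = mat2_act_hom (beta q (cf_expansion x)) 1 (1 - q)"

end

theory Submission
  imports Defs
begin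

(* Write M_P for the Moebius map of beta_{P,1}, where P is an admissible expansion with
   nonnegative entries; its matrix lies in SL_2(Z) and has nonnegative entries. A rational y
   strictly between M_P(1) and M_P(infinity) has an expansion that starts with P (after merging
   zero entries) and continues with the expansion of w = M_P^{-1}(y) > 1, so
   [y]_q = beta_{P,q}([w]_q). On [0, infinity) the generators act as the q-contractions
   z -> q z + 1 and z -> q z / (q z + 1), and [w]_q lies in [0, 1/(1-q)]. Hence the values
   [y]_q for y near an irrational t vary by at most q^N/(1-q), where N is the entry sum of a long
   prefix of the expansion of t. Near a positive rational x from the right, w is close to 1 and
   [w]_q is close to 1 = sigma_2(infinity); from the left, w tends to infinity and [w]_q tends to
   the fixed point 1/(1-q) of z -> q z + 1. The translation rule [y + 1]_q = q [y]_q + 1, which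
   for -1 < y < 0 comes from conjugation by the Garside element sigma_1 sigma_2 sigma_1, reduces
   arbitrary arguments to positive ones. *)

section \<open>Matrices acting on homogeneous coordinates\<close>

definition mat2_apply :: "mat2 \<Rightarrow> real \<times> real \<Rightarrow> real \<times> real" where
  "mat2_apply M v = (case M of (a,b,c,d) \<Rightarrow> case v of (x,y) \<Rightarrow> (a*x + b*y, c*x + d*y))"

text \<open>\<open>hom_value\<close> reads off the point \<open>x / y\<close> of the projective line from homogeneous
  coordinates \<open>(x, y)\<close>; the point \<open>\<infinity> = (1, 0)\<close> gets the junk value \<open>0\<close>.\<close>

definition hom_value :: "real \<times> real \<Rightarrow> real" where
  "hom_value v = fst v / snd v"

definition mat2_scale :: "real \<Rightarrow> mat2 \<Rightarrow> mat2" where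
  "mat2_scale s M = (case M of (a,b,c,d) \<Rightarrow> (s*a, s*b, s*c, s*d))"

definition mat2_det :: "mat2 \<Rightarrow> real" where
  "mat2_det M = (case M of (a,b,c,d) \<Rightarrow> a*d - b*c)"

lemma mat2_mult_assoc: "mat2_mult (mat2_mult M N) P = mat2_mult M (mat2_mult N P)"
  by (cases M; cases N; cases P) (simp add: mat2_mult_def algebra_simps)

lemma mat2_mult_id_left [simp]: "mat2_mult mat2_id M = M"
  by (cases M) (simp add: mat2_mult_def mat2_id_def)

lemma mat2_mult_id_right [simp]: "mat2_mult M mat2_id = M"
  by (cases M) (simp add: mat2_mult_def mat2_id_def)

lemma mat2_apply_mult: "mat2_apply (mat2_mult M N) v = mat2_apply M (mat2_apply N v)"
  by (cases M; cases N; cases v) (simp add: mat2_apply_def mat2_mult_def algebra_simps)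

lemma mat2_apply_id [simp]: "mat2_apply mat2_id v = v"
  by (cases v) (simp add: mat2_apply_def mat2_id_def)

lemma mat2_apply_scale_vec:
  "mat2_apply M (c * x, c * y) = (c * fst (mat2_apply M (x, y)), c * snd (mat2_apply M (x, y)))"
  by (cases M) (simp add: mat2_apply_def algebra_simps)

lemma hom_value_apply_scale_vec:
  "c \<noteq> 0 \<Longrightarrow> hom_value (mat2_apply M (c * x, c * y)) = hom_value (mat2_apply M (x, y))"
  by (simp add: mat2_apply_scale_vec hom_value_def)

lemma mat2_act_hom_eq: "mat2_act_hom M x y = hom_value (mat2_apply M (x, y))"
  by (cases M) (simp add: mat2_act_hom_def mat2_apply_def hom_value_def)

lemma mat2_mult_scale_left: "mat2_mult (mat2_scale s M) N = mat2_scale s (mat2_mult M N)"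
  by (cases M; cases N) (simp add: mat2_mult_def mat2_scale_def algebra_simps)

lemma mat2_mult_scale_right: "mat2_mult M (mat2_scale s N) = mat2_scale s (mat2_mult M N)"
  by (cases M; cases N) (simp add: mat2_mult_def mat2_scale_def algebra_simps)

lemma mat2_scale_scale: "mat2_scale s (mat2_scale t M) = mat2_scale (s * t) M"
  by (cases M) (simp add: mat2_scale_def)

lemma mat2_scale_1 [simp]: "mat2_scale 1 M = M"
  by (cases M) (simp add: mat2_scale_def)

lemma mat2_apply_scale: "mat2_apply (mat2_scale s M) v
    = (s * fst (mat2_apply M v), s * snd (mat2_apply M v))"
  by (cases M; cases v) (simp add: mat2_apply_def mat2_scale_def algebra_simps)

lemma hom_value_apply_scale:
  "s \<noteq> 0 \<Longrightarrow> hom_value (mat2_apply (mat2_scale s M) v) = hom_value (mat2_apply M v)"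
  by (simp add: mat2_apply_scale hom_value_def)

lemma mat2_mult_adj: "mat2_mult M (mat2_adj M) = mat2_scale (mat2_det M) mat2_id"
  by (cases M) (simp add: mat2_mult_def mat2_adj_def mat2_scale_def mat2_det_def mat2_id_def)

lemma mat2_adj_mult: "mat2_mult (mat2_adj M) M = mat2_scale (mat2_det M) mat2_id"
  by (cases M)
    (simp add: mat2_mult_def mat2_adj_def mat2_scale_def mat2_det_def mat2_id_def algebra_simps)

lemma mat2_npow_add: "mat2_npow M (m + n) = mat2_mult (mat2_npow M m) (mat2_npow M n)"
  by (induction m) (simp_all add: mat2_mult_assoc)

lemma mat2_npow_Suc_right: "mat2_npow M (Suc n) = mat2_mult (mat2_npow M n) M"
  using mat2_npow_add[of M n 1] by simp

lemma mat2_npow_intertwine: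
  assumes "mat2_mult D M = mat2_mult N D"
  shows "mat2_mult D (mat2_npow M n) = mat2_mult (mat2_npow N n) D"
proof (induction n)
  case (Suc n)
  have "mat2_mult D (mat2_npow M (Suc n)) = mat2_mult N (mat2_mult D (mat2_npow M n))"
    using assms by (simp flip: mat2_mult_assoc)
  also have "\<dots> = mat2_mult (mat2_npow N (Suc n)) D"
    by (simp add: Suc mat2_mult_assoc)
  finally show ?case .
qed simp

lemma mat2_npow_preserves:
  "(\<And>v. P v \<Longrightarrow> P (mat2_apply M v)) \<Longrightarrow> P v \<Longrightarrow> P (mat2_apply (mat2_npow M n) v)"
  by (induction n) (simp_all add: mat2_apply_mult)

lemma mat2_ipow_0 [simp]: "mat2_ipow M 0 = mat2_id"
  by (simp add: mat2_ipow_def)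

lemma mat2_ipow_nonneg: "0 \<le> k \<Longrightarrow> mat2_ipow M k = mat2_npow M (nat k)"
  by (simp add: mat2_ipow_def)

lemma mat2_ipow_neg: "0 \<le> k \<Longrightarrow> mat2_ipow M (- k) = mat2_npow (mat2_adj M) (nat k)"
  by (cases "k = 0") (simp_all add: mat2_ipow_def)

lemma mat2_ipow_add_nonneg:
  "0 \<le> j \<Longrightarrow> 0 \<le> k \<Longrightarrow> mat2_mult (mat2_ipow M j) (mat2_ipow M k) = mat2_ipow M (j + k)"
  by (simp add: mat2_ipow_nonneg nat_add_distrib flip: mat2_npow_add)

lemma mat2_ipow_add_nonpos:
  "0 \<le> j \<Longrightarrow> 0 \<le> k \<Longrightarrow> mat2_mult (mat2_ipow M (- j)) (mat2_ipow M (- k)) = mat2_ipow M (- (j + k))"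
  using mat2_ipow_neg[of "j + k" M] by (simp add: mat2_ipow_neg nat_add_distrib flip: mat2_npow_add)

lemma mat2_ipow_commute: "mat2_mult M (mat2_ipow M k) = mat2_mult (mat2_ipow M k) M"
proof -
  have "mat2_mult M (mat2_npow N n) = mat2_mult (mat2_npow N n) M"
    if "mat2_mult M N = mat2_mult N M" for N n
    using mat2_npow_intertwine[OF that] .
  moreover have "mat2_mult M (mat2_adj M) = mat2_mult (mat2_adj M) M"
    by (simp add: mat2_mult_adj mat2_adj_mult)
  ultimately show ?thesis
    by (simp add: mat2_ipow_def)
qed

text \<open>Since \<open>mat2_adj M\<close> inverts \<open>M\<close> only up to the factor \<open>mat2_det M\<close>, the exponent laws
  for integer powers hold up to a nonzero scalar.\<close>

lemma mat2_mult_ipow: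
  assumes "mat2_det M \<noteq> 0"
  obtains s where "s \<noteq> 0" "mat2_mult M (mat2_ipow M k) = mat2_scale s (mat2_ipow M (k + 1))"
proof (cases "0 \<le> k")
  case True
  then have "mat2_mult M (mat2_ipow M k) = mat2_ipow M (k + 1)"
    by (simp add: mat2_ipow_nonneg nat_add_distrib)
  then show ?thesis
    using that[of 1] by simp
next
  case False
  define n where "n = nat (- k) - 1"
  have k: "k = - int (Suc n)"
    using False by (simp add: n_def)
  have "mat2_mult M (mat2_ipow M k)
      = mat2_mult (mat2_mult M (mat2_adj M)) (mat2_npow (mat2_adj M) n)"
    by (simp only: k mat2_ipow_neg of_nat_0_le_iff nat_int mat2_npow.simps mat2_mult_assoc)
  also have "\<dots> = mat2_scale (mat2_det M) (mat2_ipow M (k + 1))"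
    using mat2_ipow_neg[of "int n" M] by (simp add: k mat2_mult_adj mat2_mult_scale_left)
  finally show ?thesis
    using that assms by blast
qed

lemma mat2_ipow_mult:
  assumes "mat2_det M \<noteq> 0"
  obtains s where "s \<noteq> 0" "mat2_mult (mat2_ipow M k) M = mat2_scale s (mat2_ipow M (k + 1))"
  using mat2_mult_ipow[OF assms] mat2_ipow_commute[of M k] by metis

lemma mat2_adj_mult_ipow:
  assumes "mat2_det M \<noteq> 0"
  obtains s where "s \<noteq> 0"
      "mat2_mult (mat2_adj M) (mat2_ipow M k) = mat2_scale s (mat2_ipow M (k - 1))"
proof (cases "0 < k")
  case True
  then have "nat k = Suc (nat (k - 1))"
    using Suc_nat_eq_nat_zadd1[of "k - 1"] by simp
  then have "mat2_ipow M k = mat2_mult M (mat2_ipow M (k - 1))"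
    using True by (simp add: mat2_ipow_nonneg)
  then have "mat2_mult (mat2_adj M) (mat2_ipow M k) = mat2_scale (mat2_det M) (mat2_ipow M (k - 1))"
    by (simp add: mat2_adj_mult mat2_mult_scale_left flip: mat2_mult_assoc)
  then show ?thesis
    using that assms by blast
next
  case False
  then have "nat (1 - k) = Suc (nat (- k))"
    using Suc_nat_eq_nat_zadd1[of "- k"] by simp
  then have "mat2_mult (mat2_adj M) (mat2_ipow M k) = mat2_ipow M (k - 1)"
    using False mat2_ipow_neg[of "- k" M] mat2_ipow_neg[of "1 - k" M] by simp
  then show ?thesis
    using that[of 1] by simp
qed

section \<open>Admissible continued fraction expansions\<close>

definition cf_pos :: "int list \<Rightarrow> bool" where
  "cf_pos L \<longleftrightarrow> L \<noteq> [] \<and> 0 \<le> hd L \<and> (\<forall>b\<in>set (tl L). 1 \<le> b)"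

lemma cf_pos_Cons: "cf_pos (a # T) \<longleftrightarrow> 0 \<le> a \<and> (\<forall>b\<in>set T. 1 \<le> b)"
  by (simp add: cf_pos_def)

lemma cf_pos_tl: "cf_pos (a # T) \<Longrightarrow> T \<noteq> [] \<Longrightarrow> cf_pos T \<and> 1 \<le> hd T"
  by (cases T) (auto simp: cf_pos_def)

lemma cf_eval_Cons: "l \<noteq> [] \<Longrightarrow> cf_eval (a # l) = of_int a + 1 / cf_eval l"
  by (cases l) simp_all

lemma cf_eval_uminus: "cf_eval (map uminus L) = - cf_eval L"
  by (induction L rule: cf_eval.induct) simp_all

lemma cf_pos_eval_bounds:
  "cf_pos (a # T) \<Longrightarrow> of_int a \<le> cf_eval (a # T) \<and> cf_eval (a # T) \<le> of_int a + 1 \<and>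
    (T \<noteq> [] \<longrightarrow> of_int a < cf_eval (a # T)) \<and> (tl T \<noteq> [] \<longrightarrow> cf_eval (a # T) < of_int a + 1)"
proof (induction T arbitrary: a)
  case (Cons b T')
  then have "cf_pos (b # T')" and b: "(1::rat) \<le> of_int b"
    using cf_pos_tl[OF Cons.prems] by auto
  then have "1 \<le> cf_eval (b # T')" "T' \<noteq> [] \<Longrightarrow> 1 < cf_eval (b # T')"
    using Cons.IH[of b] by auto
  then have "0 < 1 / cf_eval (b # T')" "1 / cf_eval (b # T') \<le> 1"
    "T' \<noteq> [] \<Longrightarrow> 1 / cf_eval (b # T') < 1"
    by auto
  then show ?case
    by (simp add: cf_eval_Cons del: cf_eval.simps)
qed simp

lemma cf_pos_inj:
  "cf_pos L1 \<Longrightarrow> cf_pos L2 \<Longrightarrow> even (length L1) = even (length L2) \<Longrightarrow>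
    cf_eval L1 = cf_eval L2 \<Longrightarrow> L1 = L2"
proof (induction L1 arbitrary: L2)
  case (Cons a T1)
  obtain b T2 where L2: "L2 = b # T2"
    using Cons.prems(2) by (cases L2) (auto simp: cf_pos_def)
  let ?v = "cf_eval (a # T1)"
  have not_int: False if "cf_pos (c # T)" "T = []" "cf_pos (d # T')" "T' \<noteq> []" "even (length T')"
      "?v = cf_eval (c # T)" "?v = cf_eval (d # T')" for c d T T'
  proof -
    have "tl T' \<noteq> []"
      using that(4,5) by (cases T') auto
    then have "of_int d < (of_int c :: rat)" "of_int c < (of_int d :: rat) + 1"
      using cf_pos_eval_bounds[OF that(3)] that(2,4,6,7) by simp_all
    then show False
      by (metis of_int_1 of_int_add of_int_less_iff zless_imp_add1_zle not_le)
  qed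
  show ?case
  proof (cases "T1 = []"; cases "T2 = []")
    assume "T1 \<noteq> []" "T2 \<noteq> []"
    have "\<lceil>?v\<rceil> = a + 1" "\<lceil>?v\<rceil> = b + 1"
      using cf_pos_eval_bounds[OF Cons.prems(1)] cf_pos_eval_bounds[of b T2] Cons.prems(2,4)
        \<open>T1 \<noteq> []\<close> \<open>T2 \<noteq> []\<close> L2 by (auto intro!: ceiling_unique)
    then have "a = b"
      by simp
    then have "cf_eval T1 = cf_eval T2"
      using Cons.prems(4) L2 \<open>T1 \<noteq> []\<close> \<open>T2 \<noteq> []\<close> by (simp add: cf_eval_Cons)
    moreover have "cf_pos T1" "cf_pos T2"
      using cf_pos_tl Cons.prems(1,2) L2 \<open>T1 \<noteq> []\<close> \<open>T2 \<noteq> []\<close> by blast+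
    ultimately have "T1 = T2"
      using Cons.IH[of T2] Cons.prems(3) L2 \<open>a = b\<close> by simp
    then show ?thesis
      using L2 \<open>a = b\<close> by simp
  qed (use not_int Cons.prems L2 in \<open>fastforce+\<close>)
qed (simp add: cf_pos_def)

text \<open>Both parities are needed in the induction since \<open>[\<dots>, a] = [\<dots>, a - 1, 1]\<close>.\<close>

lemma cf_pos_exists_frac:
  fixes p q :: nat
  assumes "0 < q" "q \<le> p" "ev \<Longrightarrow> q < p"
  shows "\<exists>L. cf_pos L \<and> 1 \<le> hd L \<and> even (length L) = ev \<and> cf_eval L = of_nat p / of_nat q"
  using assms
proof (induction q arbitrary: p ev rule: less_induct)
  case (less q)
  define a where "a = p div q"
  define r where "r = p mod q"
  have pq: "p = a * q + r" and a: "1 \<le> a" and "r < q"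
    using less.prems by (simp_all add: a_def r_def Suc_le_eq div_greater_zero_iff)
  show ?case
  proof (cases "r = 0")
    case True
    then have val: "(of_nat p / of_nat q :: rat) = of_int (int a)"
      using pq less.prems by simp
    show ?thesis
    proof (cases ev)
      case True
      then have "2 \<le> a"
        using pq \<open>r = 0\<close> less.prems by (cases "a = 1") (use a in auto)
      then show ?thesis
        using True val by (intro exI[of _ "[int a - 1, 1]"]) (simp add: cf_pos_def)
    qed (use val a in \<open>auto intro!: exI[of _ "[int a]"] simp: cf_pos_def\<close>)
  next
    case False
    then obtain T where T: "cf_pos T" "1 \<le> hd T" "even (length T) = (\<not> ev)"
        "cf_eval T = of_nat q / of_nat r"
      using less.IH[of r q "\<not> ev"] \<open>r < q\<close> by auto
    then have "T \<noteq> []" and T_ge: "\<forall>b\<in>set T. 1 \<le> b"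
      by (cases T; auto simp: cf_pos_def)+
    have "cf_eval (int a # T) = of_nat a + of_nat r / of_nat q"
      using \<open>T \<noteq> []\<close> T(4) by (simp add: cf_eval_Cons)
    also have "\<dots> = of_nat p / of_nat q"
      using pq less.prems(1) by (simp add: field_simps)
    finally show ?thesis
      using T a T_ge \<open>T \<noteq> []\<close> by (intro exI[of _ "int a # T"]) (auto simp: cf_pos_def)
  qed
qed

lemma cf_pos_exists: "0 < (x::rat) \<Longrightarrow> \<exists>L. cf_pos L \<and> even (length L) \<and> cf_eval L = x"
proof -
  assume "0 < x"
  obtain n d where nd: "quotient_of x = (n, d)"
    by (cases "quotient_of x")
  have "0 < d" "x = of_int n / of_int d"
    using quotient_of_denom_pos[OF nd] quotient_of_div[OF nd] by simp_all
  with \<open>0 < x\<close> obtain p q :: nat where pq: "0 < p" "0 < q" "x = of_nat p / of_nat q"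
    by (intro that[of "nat n" "nat d"]) (simp_all add: zero_less_divide_iff)
  show ?thesis
  proof (cases "q < p")
    case True
    then show ?thesis
      using cf_pos_exists_frac[of q p True] pq by auto
  next
    case False
    then obtain T where T: "cf_pos T" "1 \<le> hd T" "odd (length T)" "cf_eval T = of_nat q / of_nat p"
      using cf_pos_exists_frac[of p q False] pq by auto
    then have "T \<noteq> []" "\<forall>b\<in>set T. 1 \<le> b"
      by (cases T; auto simp: cf_pos_def)+
    then have "cf_pos (0 # T)" "cf_eval (0 # T) = x"
      using T pq by (auto simp: cf_eval_Cons cf_pos_def)
    then show ?thesis
      using T(3) by (intro exI[of _ "0 # T"]) simp
  qed
qed

lemma cf_pos_even_eval_pos:
  assumes "cf_pos L" "even (length L)"
  shows "0 < cf_eval L"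
proof -
  obtain a T where L: "L = a # T" "T \<noteq> []"
    using assms by (cases L; cases "tl L") (auto simp: cf_pos_def)
  then show ?thesis
    using assms(1) cf_pos_eval_bounds[of a T] by (auto simp: cf_pos_def)
qed

lemma cf_pos_even_entries:
  assumes "cf_pos L" "even (length L)"
  shows "L \<noteq> []" "\<forall>e\<in>set L. 0 \<le> e" "1 \<le> last L"
  using assms by (cases L; cases "tl L"; auto simp: cf_pos_def)+

lemma cf_valid_cases:
  assumes "cf_valid L"
  shows "even (length L) \<and>
    (cf_pos L \<and> 0 < cf_eval L \<or> cf_pos (map uminus L) \<and> cf_eval L < 0)"
proof -
  have even: "even (length L)"
    using assms by (simp add: cf_valid_def)
  have "cf_pos L \<or> cf_pos (map uminus L)"
    using assms by (cases L) (auto simp: cf_valid_def cf_pos_def)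
  then show ?thesis
    using cf_pos_even_eval_pos[of L] cf_pos_even_eval_pos[of "map uminus L"] even
    by (auto simp: cf_eval_uminus)
qed

lemma cf_valid_inj: "cf_valid L1 \<Longrightarrow> cf_valid L2 \<Longrightarrow> cf_eval L1 = cf_eval L2 \<Longrightarrow> L1 = L2"
  using cf_valid_cases[of L1] cf_valid_cases[of L2]
    cf_pos_inj[of L1 L2] cf_pos_inj[of "map uminus L1" "map uminus L2"]
  by (auto simp: cf_eval_uminus)

lemma cf_valid_if_cf_pos: "cf_pos L \<Longrightarrow> even (length L) \<Longrightarrow> cf_valid L"
  by (simp add: cf_valid_def cf_pos_def)

lemma cf_expansion_cf_eval: "cf_valid L \<Longrightarrow> cf_expansion (cf_eval L) = L"
  using cf_valid_inj cf_valid_cases[of L] unfolding cf_expansion_def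
  by (auto intro!: the_equality)

lemma cf_expansion_valid:
  assumes "x \<noteq> 0"
  shows "cf_valid (cf_expansion x)" "cf_eval (cf_expansion x) = x"
proof -
  obtain L where L: "cf_pos L" "even (length L)" "cf_eval L = \<bar>x\<bar>"
    using cf_pos_exists assms by force
  then have "cf_valid L \<and> cf_eval L = x \<or> cf_valid (map uminus L) \<and> cf_eval (map uminus L) = x"
    using assms cf_eval_uminus[of L] by (cases L) (auto simp: cf_valid_def cf_pos_def abs_if)
  then show "cf_valid (cf_expansion x)" "cf_eval (cf_expansion x) = x"
    using cf_expansion_cf_eval by metis+
qed

lemma cf_expansion_pos:
  assumes "0 < x"
  shows "cf_pos (cf_expansion x)" "even (length (cf_expansion x))" "cf_eval (cf_expansion x) = x"
proof -
  have "x \<noteq> 0"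
    using assms by simp
  then show "cf_pos (cf_expansion x)" "even (length (cf_expansion x))"
      "cf_eval (cf_expansion x) = x"
    using cf_valid_cases[OF cf_expansion_valid(1)] cf_expansion_valid(2) assms by fastforce+
qed

lemma cf_expansion_neg:
  assumes "x < 0"
  shows "cf_pos (map uminus (cf_expansion x))" "even (length (cf_expansion x))"
    "cf_eval (cf_expansion x) = x"
proof -
  have "x \<noteq> 0"
    using assms by simp
  then show "cf_pos (map uminus (cf_expansion x))" "even (length (cf_expansion x))"
      "cf_eval (cf_expansion x) = x"
    using cf_valid_cases[OF cf_expansion_valid(1)] cf_expansion_valid(2) assms by fastforce+
qed

lemma cf_expansion_add_one_Cons:
  assumes "cf_expansion y = a # rest" "0 < y \<or> y < 0 \<and> a \<le> -1"
  shows "cf_expansion (y + 1) = (a + 1) # rest"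
proof -
  have "y \<noteq> 0"
    using assms(2) by auto
  then have valid: "cf_valid (a # rest)" and eval: "cf_eval (a # rest) = y"
    using cf_expansion_valid assms(1) by metis+
  then have "rest \<noteq> []"
    by (cases rest) (simp_all add: cf_valid_def)
  have "cf_valid ((a + 1) # rest)"
    using valid assms(2) cf_valid_cases[OF valid] eval by (auto simp: cf_valid_def cf_pos_def)
  moreover have "cf_eval ((a + 1) # rest) = y + 1"
    using eval \<open>rest \<noteq> []\<close> by (simp add: cf_eval_Cons)
  ultimately show ?thesis
    using cf_expansion_cf_eval by metis
qed

section \<open>Words in the generators\<close>

abbreviation sigma1_inv :: "real \<Rightarrow> mat2" where
  "sigma1_inv q \<equiv> mat2_adj (sigma1 q)"

abbreviation sigma2_inv :: "real \<Rightarrow> mat2" where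
  "sigma2_inv q \<equiv> mat2_adj (sigma2 q)"

fun sigma_word :: "real \<Rightarrow> bool \<Rightarrow> int list \<Rightarrow> mat2" where
  "sigma_word q s1 [] = mat2_id"
| "sigma_word q s1 (k # l) = mat2_mult
     (if s1 then mat2_ipow (sigma1 q) (- k) else mat2_ipow (sigma2 q) k) (sigma_word q (\<not> s1) l)"

lemma beta_eq_sigma_word: "even (length L) \<Longrightarrow> beta q L = sigma_word q True L"
  by (induction L rule: induct_list012) (simp_all add: mat2_mult_assoc)

lemma sigma_word_append:
  "sigma_word q s (l1 @ l2) =
    mat2_mult (sigma_word q s l1) (sigma_word q (if even (length l1) then s else \<not> s) l2)"
  by (induction l1 arbitrary: s) (simp_all add: mat2_mult_assoc)

lemma beta_append: "even (length P) \<Longrightarrow> beta q (P @ L) = mat2_mult (beta q P) (beta q L)"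
  by (induction P rule: induct_list012) (simp_all add: mat2_mult_assoc)

text \<open>Removing an interior zero entry and adding its two neighbours changes neither the value of
  the continued fraction nor the word, as long as no cancellation \<open>\<sigma>\<^sup>k \<sigma>\<^sup>-\<^sup>l\<close> occurs.\<close>

fun merge_zeros :: "int list \<Rightarrow> int list" where
  "merge_zeros (a # b # c # rest) =
     (if b = 0 then merge_zeros ((a + c) # rest) else a # merge_zeros (b # c # rest))"
| "merge_zeros l = l"

lemma sigma_word_merge_zeros:
  "\<forall>e\<in>set l. 0 \<le> e \<Longrightarrow> sigma_word q s (merge_zeros l) = sigma_word q s l"
proof (induction l arbitrary: s rule: merge_zeros.induct)
  case (1 a b c rest)
  then show ?case
    by (cases s) (auto simp flip: mat2_mult_assoc simp: mat2_ipow_add_nonneg mat2_ipow_add_nonpos)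
qed simp_all

lemma beta_merge_zeros:
  "\<forall>e\<in>set l. 0 \<le> e \<Longrightarrow> even (length l) \<Longrightarrow> even (length (merge_zeros l)) \<Longrightarrow>
    beta q (merge_zeros l) = beta q l"
  by (simp add: beta_eq_sigma_word sigma_word_merge_zeros)

lemma merge_zeros_nonempty: "l \<noteq> [] \<Longrightarrow> merge_zeros l \<noteq> []"
  by (induction l rule: merge_zeros.induct) auto

lemma cf_eval_merge_zeros: "cf_eval (merge_zeros l) = cf_eval l"
proof (induction l rule: merge_zeros.induct)
  case (1 a b c rest)
  show ?case
  proof (cases "b = 0")
    case True
    then have "cf_eval (merge_zeros (a # b # c # rest)) = cf_eval ((a + c) # rest)"
      using 1 by simp
    also have "\<dots> = cf_eval (a # b # c # rest)"
      using True by (cases rest) simp_all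
    finally show ?thesis .
  next
    case False
    then show ?thesis
      using 1 merge_zeros_nonempty[of "b # c # rest"] by (simp add: cf_eval_Cons del: cf_eval.simps)
  qed
qed simp_all

lemma hd_merge_zeros: "\<forall>e\<in>set l. 0 \<le> e \<Longrightarrow> hd l \<le> hd (merge_zeros l)"
  by (induction l rule: merge_zeros.induct) force+

lemma merge_zeros_cf_pos:
  assumes "l \<noteq> []" "\<forall>e\<in>set l. 0 \<le> e" "1 \<le> last l"
  shows "cf_pos (merge_zeros l) \<and> even (length (merge_zeros l)) = even (length l)"
  using assms
proof (induction l rule: merge_zeros.induct)
  case (1 a b c rest)
  show ?case
  proof (cases "b = 0")
    case True
    then show ?thesis
      using 1(1) 1(4,5) by (auto split: if_splits)
  next
    case False
    then have "cf_pos (merge_zeros (b # c # rest))"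
      "even (length (merge_zeros (b # c # rest))) = even (length (b # c # rest))"
      using 1(2) 1(4,5) by auto
    moreover have "b \<le> hd (merge_zeros (b # c # rest))"
      using hd_merge_zeros[of "b # c # rest"] 1(4) by simp
    ultimately show ?thesis
      using False 1(4) by (cases "merge_zeros (b # c # rest)") (auto simp: cf_pos_def)
  qed
qed (auto simp: cf_pos_def)

section \<open>The classical case \<open>q = 1\<close>\<close>

lemma mat2_npow_upper: "mat2_npow (1, b, 0, 1) n = (1, real n * b, 0, 1)"
  by (induction n) (simp_all add: mat2_mult_def mat2_id_def algebra_simps)

lemma mat2_npow_lower: "mat2_npow (1, 0, c, 1) n = (1, 0, real n * c, 1)"
  by (induction n) (simp_all add: mat2_mult_def mat2_id_def algebra_simps)

lemma mat2_ipow_sigma1_1: "mat2_ipow (sigma1 1) k = (1, - of_int k, 0, 1)"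
  by (simp add: mat2_ipow_def sigma1_def mat2_adj_def mat2_npow_upper)

lemma mat2_ipow_sigma2_1: "mat2_ipow (sigma2 1) k = (1, 0, of_int k, 1)"
  by (simp add: mat2_ipow_def sigma2_def mat2_adj_def mat2_npow_lower)

lemma mat2_apply_beta_1_Cons2:
  "mat2_apply (beta 1 rest) v = (X, Y) \<Longrightarrow>
    mat2_apply (beta 1 (a # b # rest)) v = (X + of_int a * (of_int b * X + Y), of_int b * X + Y)"
  by (simp add: mat2_apply_mult mat2_ipow_sigma1_1 mat2_ipow_sigma2_1) (simp add: mat2_apply_def)

lemma hom_value_beta_1_Cons2:
  assumes "mat2_apply (beta 1 rest) v = (X, Y)" "X \<noteq> 0" "Y \<noteq> 0" "of_int b * X + Y \<noteq> 0"
  shows "hom_value (mat2_apply (beta 1 (a # b # rest)) v) = of_int a + 1 / (of_int b + 1 / (X / Y))"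
  using assms by (simp add: mat2_apply_beta_1_Cons2 hom_value_def field_simps del: beta.simps)

lemma cf_eval_eq_beta_1_pos:
  "even (length L) \<Longrightarrow> L \<noteq> [] \<Longrightarrow> \<forall>e\<in>set L. 0 \<le> e \<Longrightarrow> 1 \<le> last L \<Longrightarrow>
    0 < fst (mat2_apply (beta 1 L) (1, 0)) \<and> 0 < snd (mat2_apply (beta 1 L) (1, 0)) \<and>
    real_of_rat (cf_eval L) = hom_value (mat2_apply (beta 1 L) (1, 0))"
proof (induction L rule: induct_list012)
  case (3 a b rest)
  have ab: "0 \<le> a" "0 \<le> b"
    using 3 by auto
  show ?case
  proof (cases "rest = []")
    case True
    have e: "mat2_apply (beta 1 [a, b]) (1, 0) = (1 + of_int a * of_int b, of_int b)"
      using mat2_apply_beta_1_Cons2[of "[]" "(1, 0)" 1 0 a b] by simp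
    have "1 \<le> b"
      using 3 True by simp
    then show ?thesis
      using True ab
      by (simp add: e hom_value_def of_rat_add of_rat_divide of_rat_mult add_pos_nonneg field_simps
          del: beta.simps)
  next
    case False
    obtain X Y where XY: "mat2_apply (beta 1 rest) (1, 0) = (X, Y)"
      by (cases "mat2_apply (beta 1 rest) (1, 0)")
    have IH: "0 < X" "0 < Y" "real_of_rat (cf_eval rest) = X / Y"
      using 3 XY False by (auto simp: hom_value_def)
    have pos: "0 < of_int b * X + Y" "0 < X + of_int a * (of_int b * X + Y)"
      using IH ab by (simp_all add: add_nonneg_pos add_pos_nonneg)
    have "real_of_rat (cf_eval (a # b # rest)) = of_int a + 1 / (of_int b + 1 / (X / Y))"
      using IH False by (simp add: cf_eval_Cons of_rat_add of_rat_divide)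
    then show ?thesis
      using pos hom_value_beta_1_Cons2[OF XY, of b a] IH
      by (simp add: mat2_apply_beta_1_Cons2[OF XY] del: beta.simps)
  qed
qed simp_all

lemma cf_eval_eq_beta_1_neg:
  "even (length L) \<Longrightarrow> cf_pos (map uminus L) \<Longrightarrow>
    0 < fst (mat2_apply (beta 1 L) (1, 0)) \<and> snd (mat2_apply (beta 1 L) (1, 0)) < 0 \<and>
    real_of_rat (cf_eval L) = hom_value (mat2_apply (beta 1 L) (1, 0))"
proof (induction L rule: induct_list012)
  case (3 a b rest)
  have ab: "a \<le> 0" "b \<le> -1" and rest: "\<forall>e\<in>set rest. e \<le> -1"
    using 3(4) by (auto simp: cf_pos_def)
  show ?case
  proof (cases "rest = []")
    case True
    have e: "mat2_apply (beta 1 [a, b]) (1, 0) = (1 + of_int a * of_int b, of_int b)"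
      using mat2_apply_beta_1_Cons2[of "[]" "(1, 0)" 1 0 a b] by simp
    have "0 \<le> real_of_int a * real_of_int b"
      using ab by (simp add: mult_nonpos_nonpos)
    then show ?thesis
      using True ab
      by (simp add: e hom_value_def of_rat_add of_rat_divide of_rat_mult field_simps del:
        beta.simps)
  next
    case False
    obtain X Y where XY: "mat2_apply (beta 1 rest) (1, 0) = (X, Y)"
      by (cases "mat2_apply (beta 1 rest) (1, 0)")
    have "cf_pos (map uminus rest)"
      using False rest by (cases rest) (auto simp: cf_pos_def)
    then have IH: "0 < X" "Y < 0" "real_of_rat (cf_eval rest) = X / Y"
      using 3 XY by (auto simp: hom_value_def)
    have "real_of_int b * X \<le> -1 * X"
      using ab IH by (intro mult_right_mono) simp_all
    then have neg: "of_int b * X + Y < 0"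
      using IH by linarith
    then have pos: "0 < X + of_int a * (of_int b * X + Y)"
      using IH ab by (simp add: add_pos_nonneg mult_nonpos_nonpos)
    have "real_of_rat (cf_eval (a # b # rest)) = of_int a + 1 / (of_int b + 1 / (X / Y))"
      using IH False by (simp add: cf_eval_Cons of_rat_add of_rat_divide)
    then show ?thesis
      using pos neg hom_value_beta_1_Cons2[OF XY, of b a] IH
      by (simp add: mat2_apply_beta_1_Cons2[OF XY] del: beta.simps)
  qed
qed (simp_all add: cf_pos_def)

lemma beta_1_int_det:
  "even (length L) \<Longrightarrow>
    (case beta 1 L of (p, p', r, r') \<Rightarrow> p \<in> \<int> \<and> p' \<in> \<int> \<and> r \<in> \<int> \<and> r' \<in> \<int> \<and> p * r' - p' * r = 1)"
proof (induction L rule: induct_list012)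
  case (3 a b rest)
  then show ?case
    by (cases "beta 1 rest")
      (auto simp: mat2_ipow_sigma1_1 mat2_ipow_sigma2_1 mat2_mult_def algebra_simps)
qed (simp_all add: mat2_id_def)

lemma beta_1_nonneg:
  "even (length L) \<Longrightarrow> \<forall>e\<in>set L. 0 \<le> e \<Longrightarrow>
    (case beta 1 L of (p, p', r, r') \<Rightarrow> 0 \<le> p \<and> 0 \<le> p' \<and> 0 \<le> r \<and> 0 \<le> r')"
proof (induction L rule: induct_list012)
  case (3 a b rest)
  then show ?case
    by (cases "beta 1 rest") (auto simp: mat2_ipow_sigma1_1 mat2_ipow_sigma2_1 mat2_mult_def)
qed (simp_all add: mat2_id_def)

lemma beta_1_cases:
  assumes "even (length P)" "\<forall>e\<in>set P. 0 \<le> e"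
  obtains p p' r r' where "beta 1 P = (p, p', r, r')"
    "p \<in> \<int>" "p' \<in> \<int>" "r \<in> \<int>" "r' \<in> \<int>" "p * r' - p' * r = 1"
    "0 \<le> p" "0 \<le> p'" "0 \<le> r" "0 \<le> r'" "0 < r + r'"
proof -
  obtain p p' r r' where M: "beta 1 P = (p, p', r, r')"
    by (cases "beta 1 P") auto
  then have int: "p \<in> \<int>" "p' \<in> \<int>" "r \<in> \<int>" "r' \<in> \<int>" and det: "p * r' - p' * r = 1"
    and nonneg: "0 \<le> p" "0 \<le> p'" "0 \<le> r" "0 \<le> r'"
    using beta_1_int_det[OF assms(1)] beta_1_nonneg[OF assms] by auto
  have "0 < r + r'"
  proof (rule ccontr)
    assume "\<not> 0 < r + r'"
    then have "r = 0" "r' = 0"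
      using nonneg by auto
    then show False
      using det by simp
  qed
  then show ?thesis
    using that M int det nonneg by blast
qed

section \<open>Contraction on the nonnegative half-line\<close>

definition nonneg_pt :: "real \<times> real \<Rightarrow> bool" where
  "nonneg_pt v \<longleftrightarrow> 0 \<le> fst v \<and> 0 < snd v"

definition quadrant_pt :: "real \<times> real \<Rightarrow> bool" where
  "quadrant_pt v \<longleftrightarrow> 0 \<le> fst v \<and> 0 \<le> snd v \<and> v \<noteq> (0, 0)"

definition entry_sum :: "int list \<Rightarrow> nat" where
  "entry_sum L = sum_list (map nat L)"

lemma nonneg_pt_hom_value: "nonneg_pt v \<Longrightarrow> 0 \<le> hom_value v"
  by (simp add: nonneg_pt_def hom_value_def)

lemma mat2_npow_lipschitz:
  assumes preserves: "\<And>v. nonneg_pt v \<Longrightarrow> nonneg_pt (mat2_apply M v)"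
    and lipschitz: "\<And>u v. nonneg_pt u \<Longrightarrow> nonneg_pt v \<Longrightarrow>
      \<bar>hom_value (mat2_apply M u) - hom_value (mat2_apply M v)\<bar> \<le> c * \<bar>hom_value u - hom_value v\<bar>"
    and "0 \<le> c" "nonneg_pt u" "nonneg_pt v"
  shows "\<bar>hom_value (mat2_apply (mat2_npow M n) u) - hom_value (mat2_apply (mat2_npow M n) v)\<bar>
    \<le> c ^ n * \<bar>hom_value u - hom_value v\<bar>"
proof (induction n)
  case (Suc n)
  let ?u = "mat2_apply (mat2_npow M n) u" and ?v = "mat2_apply (mat2_npow M n) v"
  have "nonneg_pt ?u" "nonneg_pt ?v"
    using mat2_npow_preserves[of nonneg_pt, OF preserves] assms(4,5) by blast+
  then have "\<bar>hom_value (mat2_apply M ?u) - hom_value (mat2_apply M ?v)\<bar>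
      \<le> c * \<bar>hom_value ?u - hom_value ?v\<bar>"
    by (rule lipschitz)
  also have "\<dots> \<le> c * (c ^ n * \<bar>hom_value u - hom_value v\<bar>)"
    using Suc \<open>0 \<le> c\<close> by (rule mult_left_mono)
  finally show ?case
    by (simp add: mat2_apply_mult)
qed simp

lemma mat2_apply_beta_Cons2:
  "0 \<le> a \<Longrightarrow> 0 \<le> b \<Longrightarrow> mat2_apply (beta q (a # b # rest)) v =
    mat2_apply (mat2_npow (sigma1_inv q) (nat a))
      (mat2_apply (mat2_npow (sigma2 q) (nat b)) (mat2_apply (beta q rest) v))"
  by (simp add: mat2_apply_mult mat2_ipow_neg mat2_ipow_nonneg)

context
  fixes q :: real
  assumes q_pos: "0 < q"
begin

lemma sigma1_inv_eq: "sigma1_inv q = (1, 1/q, 0, 1/q)"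
  by (simp add: mat2_adj_def sigma1_def)

lemma hom_value_sigma1_inv:
  "snd v \<noteq> 0 \<Longrightarrow> hom_value (mat2_apply (sigma1_inv q) v) = q * hom_value v + 1"
  using q_pos by (cases v) (simp add: sigma1_inv_eq mat2_apply_def hom_value_def field_simps)

lemma nonneg_pt_sigma1_inv: "nonneg_pt v \<Longrightarrow> nonneg_pt (mat2_apply (sigma1_inv q) v)"
  using q_pos by (cases v) (simp add: sigma1_inv_eq mat2_apply_def nonneg_pt_def)

lemma nonneg_pt_sigma2: "nonneg_pt v \<Longrightarrow> nonneg_pt (mat2_apply (sigma2 q) v)"
  using q_pos by (cases v) (simp add: sigma2_def mat2_apply_def nonneg_pt_def add_nonneg_pos)

lemma hom_value_sigma2:
  "nonneg_pt v \<Longrightarrow> hom_value (mat2_apply (sigma2 q) v) = q * hom_value v / (q * hom_value v + 1)"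
  using q_pos
  by (cases v) (simp add: sigma2_def mat2_apply_def nonneg_pt_def hom_value_def field_simps)

lemma quadrant_pt_sigma2:
  assumes "quadrant_pt v"
  shows "nonneg_pt (mat2_apply (sigma2 q) v)" "hom_value (mat2_apply (sigma2 q) v) \<le> 1"
proof -
  obtain x y where v: "v = (x, y)" "0 \<le> x" "0 \<le> y" "0 < x \<or> 0 < y"
    using assms by (cases v) (auto simp: quadrant_pt_def)
  then have "0 < x + y / q" "x \<le> x + y / q"
    using q_pos by (auto intro: add_pos_nonneg add_nonneg_pos)
  then show "nonneg_pt (mat2_apply (sigma2 q) v)" "hom_value (mat2_apply (sigma2 q) v) \<le> 1"
    using v by (simp_all add: sigma2_def mat2_apply_def nonneg_pt_def hom_value_def)
qed

lemma sigma1_inv_lipschitz: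
  "nonneg_pt u \<Longrightarrow> nonneg_pt v \<Longrightarrow>
    \<bar>hom_value (mat2_apply (sigma1_inv q) u) - hom_value (mat2_apply (sigma1_inv q) v)\<bar>
      \<le> q * \<bar>hom_value u - hom_value v\<bar>"
  using q_pos by (simp add: nonneg_pt_def hom_value_sigma1_inv abs_mult flip: right_diff_distrib)

lemma sigma2_lipschitz:
  assumes "nonneg_pt u" "nonneg_pt v"
  shows "\<bar>hom_value (mat2_apply (sigma2 q) u) - hom_value (mat2_apply (sigma2 q) v)\<bar>
    \<le> q * \<bar>hom_value u - hom_value v\<bar>"
proof -
  define y z where "y = hom_value u" and "z = hom_value v"
  have d: "1 \<le> q * y + 1" "1 \<le> q * z + 1"
    using assms q_pos by (simp_all add: y_def z_def nonneg_pt_hom_value)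
  then have "1 \<le> (q * y + 1) * (q * z + 1)"
    using mult_mono[OF d] by simp
  moreover have "q * y / (q * y + 1) - q * z / (q * z + 1)
      = q * (y - z) / ((q * y + 1) * (q * z + 1))"
    using d by (simp add: field_simps)
  moreover have "q * \<bar>y - z\<bar> / ((q * y + 1) * (q * z + 1)) \<le> q * \<bar>y - z\<bar> / 1"
    using \<open>1 \<le> (q * y + 1) * (q * z + 1)\<close> q_pos by (intro divide_left_mono) auto
  ultimately have "\<bar>q * y / (q * y + 1) - q * z / (q * z + 1)\<bar> \<le> q * \<bar>y - z\<bar>"
    using d q_pos by (simp add: abs_mult abs_divide)
  then show ?thesis
    using assms by (simp add: hom_value_sigma2 y_def z_def)
qed

lemma sigma1_inv_npow_value:
  assumes "q \<noteq> 1" "nonneg_pt v"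
  shows "hom_value (mat2_apply (mat2_npow (sigma1_inv q) n) v) - 1 / (1 - q) =
    q ^ n * (hom_value v - 1 / (1 - q))"
proof (induction n)
  case (Suc n)
  let ?u = "mat2_apply (mat2_npow (sigma1_inv q) n) v"
  have "nonneg_pt ?u"
    using mat2_npow_preserves[of nonneg_pt, OF nonneg_pt_sigma1_inv assms(2)] .
  then have "hom_value (mat2_apply (sigma1_inv q) ?u) - 1 / (1 - q)
      = q * (hom_value ?u - 1 / (1 - q))"
    using assms(1) by (simp add: hom_value_sigma1_inv nonneg_pt_def field_simps)
  then show ?case
    using Suc by (simp add: mat2_apply_mult)
qed simp

lemma sigma2_npow_bound:
  "nonneg_pt v \<Longrightarrow> hom_value (mat2_apply (mat2_npow (sigma2 q) n) v) \<le> q ^ n * hom_value v"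
proof (induction n)
  case (Suc n)
  let ?u = "mat2_apply (mat2_npow (sigma2 q) n) v"
  have "nonneg_pt ?u"
    using mat2_npow_preserves[of nonneg_pt, OF nonneg_pt_sigma2 Suc.prems] .
  then have "0 \<le> q * hom_value ?u"
    using q_pos nonneg_pt_hom_value by simp
  then have "hom_value (mat2_apply (sigma2 q) ?u) \<le> q * hom_value ?u"
    using \<open>nonneg_pt ?u\<close> by (simp add: hom_value_sigma2 divide_le_eq mult_le_cancel_left1)
  also have "\<dots> \<le> q * (q ^ n * hom_value v)"
    using Suc q_pos by simp
  finally show ?case
    by (simp add: mat2_apply_mult)
qed simp

lemma sigma2_npow_quadrant:
  assumes "quadrant_pt v" "1 \<le> n"
  shows "nonneg_pt (mat2_apply (mat2_npow (sigma2 q) n) v)"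
    "hom_value (mat2_apply (mat2_npow (sigma2 q) n) v) \<le> q ^ (n - 1)"
proof -
  obtain m where n: "n = Suc m"
    using assms(2) by (cases n) auto
  let ?u = "mat2_apply (sigma2 q) v"
  have u: "nonneg_pt ?u" "hom_value ?u \<le> 1"
    using quadrant_pt_sigma2[OF assms(1)] by auto
  have "mat2_apply (mat2_npow (sigma2 q) n) v = mat2_apply (mat2_npow (sigma2 q) m) ?u"
    by (simp add: n mat2_npow_Suc_right mat2_apply_mult del: mat2_npow.simps)
  moreover have "q ^ m * hom_value ?u \<le> q ^ m"
    using u(2) q_pos by (simp add: mult_left_le)
  ultimately show "nonneg_pt (mat2_apply (mat2_npow (sigma2 q) n) v)"
    "hom_value (mat2_apply (mat2_npow (sigma2 q) n) v) \<le> q ^ (n - 1)"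
    using mat2_npow_preserves[of nonneg_pt, OF nonneg_pt_sigma2 u(1)]
      sigma2_npow_bound[OF u(1), of m] n
    by auto
qed

lemma beta_nonneg_pt:
  "even (length L) \<Longrightarrow> \<forall>e\<in>set L. 0 \<le> e \<Longrightarrow> nonneg_pt v \<Longrightarrow> nonneg_pt (mat2_apply (beta q L) v)"
proof (induction L rule: induct_list012)
  case (3 a b rest)
  then show ?case
    using mat2_npow_preserves[of nonneg_pt, OF nonneg_pt_sigma2]
      mat2_npow_preserves[of nonneg_pt, OF nonneg_pt_sigma1_inv]
    by (simp add: mat2_apply_beta_Cons2 del: beta.simps)
qed simp_all

lemma beta_quadrant_pt:
  "even (length L) \<Longrightarrow> L \<noteq> [] \<Longrightarrow> \<forall>e\<in>set L. 0 \<le> e \<Longrightarrow> 1 \<le> last L \<Longrightarrow> quadrant_pt v \<Longrightarrow>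
    nonneg_pt (mat2_apply (beta q L) v)"
proof (induction L rule: induct_list012)
  case (3 a b rest)
  have "nonneg_pt (mat2_apply (mat2_npow (sigma2 q) (nat b)) (mat2_apply (beta q rest) v))"
  proof (cases "rest = []")
    case True
    then show ?thesis
      using 3 sigma2_npow_quadrant(1)[of v "nat b"] by simp
  next
    case False
    then show ?thesis
      using 3 mat2_npow_preserves[of nonneg_pt, OF nonneg_pt_sigma2] by simp
  qed
  then show ?case
    using 3(5) mat2_npow_preserves[of nonneg_pt, OF nonneg_pt_sigma1_inv]
    by (simp add: mat2_apply_beta_Cons2 del: beta.simps)
qed simp_all

lemma beta_lipschitz:
  "even (length L) \<Longrightarrow> \<forall>e\<in>set L. 0 \<le> e \<Longrightarrow> nonneg_pt u \<Longrightarrow> nonneg_pt v \<Longrightarrow>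
    \<bar>hom_value (mat2_apply (beta q L) u) - hom_value (mat2_apply (beta q L) v)\<bar>
      \<le> q ^ entry_sum L * \<bar>hom_value u - hom_value v\<bar>"
proof (induction L rule: induct_list012)
  case (3 a b rest)
  let ?A = "mat2_npow (sigma1_inv q) (nat a)" and ?B = "mat2_npow (sigma2 q) (nat b)"
  let ?u = "mat2_apply (beta q rest) u" and ?v = "mat2_apply (beta q rest) v"
  have ab: "0 \<le> a" "0 \<le> b"
    using 3 by auto
  have uv: "nonneg_pt ?u" "nonneg_pt ?v"
    using beta_nonneg_pt 3 by auto
  then have Buv: "nonneg_pt (mat2_apply ?B ?u)" "nonneg_pt (mat2_apply ?B ?v)"
    using mat2_npow_preserves[of nonneg_pt, OF nonneg_pt_sigma2] by blast+
  have "\<bar>hom_value (mat2_apply ?A (mat2_apply ?B ?u)) - hom_value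
      (mat2_apply ?A (mat2_apply ?B ?v))\<bar>
      \<le> q ^ nat a * \<bar>hom_value (mat2_apply ?B ?u) - hom_value (mat2_apply ?B ?v)\<bar>"
    using mat2_npow_lipschitz[OF nonneg_pt_sigma1_inv sigma1_inv_lipschitz _ Buv] q_pos by simp
  also have "\<dots> \<le> q ^ nat a * (q ^ nat b * \<bar>hom_value ?u - hom_value ?v\<bar>)"
    using mat2_npow_lipschitz[OF nonneg_pt_sigma2 sigma2_lipschitz _ uv] q_pos
    by (intro mult_left_mono) simp_all
  also have "\<dots> \<le> q ^ nat a * (q ^ nat b * (q ^ entry_sum rest * \<bar>hom_value u - hom_value v\<bar>))"
    using 3 q_pos by (intro mult_left_mono) simp_all
  also have "\<dots> = q ^ entry_sum (a # b # rest) * \<bar>hom_value u - hom_value v\<bar>"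
    by (simp add: entry_sum_def power_add)
  finally show ?case
    using ab by (simp add: mat2_apply_beta_Cons2 del: beta.simps)
qed (simp_all add: entry_sum_def)

end

section \<open>The value \<open>[w]\<^sup>\<sharp>\<^sub>q\<close> for \<open>w > 1\<close>\<close>

lemma qrat_sharp_eq: "qrat_sharp q x = hom_value (mat2_apply (beta q (cf_expansion x)) (1, 0))"
  by (simp add: qrat_sharp_def mat2_act_hom_eq)

lemma qrat_flat_eq:
  assumes "q < 1"
  shows "qrat_flat q x = hom_value (mat2_apply (beta q (cf_expansion x)) (1 / (1 - q), 1))"
proof -
  have "(1, 1 - q) = ((1 - q) * (1 / (1 - q)), (1 - q) * 1)"
    using assms by simp
  then show ?thesis
    using assms hom_value_apply_scale_vec[of "1 - q" _ "1 / (1 - q)" 1]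
    by (simp add: qrat_flat_def mat2_act_hom_eq)
qed

context
  fixes q :: real
  assumes q_pos: "0 < q" and q_less_1: "q < 1"
begin

lemma qrat_sharp_gt_1_cases:
  fixes w :: rat
  assumes "1 < w"
  obtains c d u where "1 \<le> c" "of_int c < w" "w \<le> of_int c + 1" "1 \<le> d"
    "nonneg_pt u" "hom_value u \<le> q ^ (nat d - 1)"
    "mat2_apply (beta q (cf_expansion w)) (1, 0) = mat2_apply (mat2_npow (sigma1_inv q) (nat c)) u"
    "c = 1 \<Longrightarrow> 1 / (w - 1) \<le> of_int d + 1"
proof -
  have W: "cf_pos (cf_expansion w)" "even (length (cf_expansion w))" "cf_eval (cf_expansion w) = w"
    using cf_expansion_pos assms by auto
  then obtain c d R where cdR: "cf_expansion w = c # d # R"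
    by (cases "cf_expansion w" rule: remdups_adj.cases) (auto simp: cf_pos_def)
  have R: "\<forall>e\<in>set R. 1 \<le> e" "1 \<le> d" "0 \<le> c" "even (length R)"
    using W(1,2) cdR by (auto simp: cf_pos_def)
  have c: "of_int c < w" "w \<le> of_int c + 1"
    using cf_pos_eval_bounds[of c "d # R"] W cdR by auto
  then have "1 \<le> c"
    using assms by linarith
  have "quadrant_pt (mat2_apply (beta q R) (1, 0))"
  proof (cases "R = []")
    case False
    then have "\<forall>e\<in>set R. 0 \<le> e" "1 \<le> last R"
      using R(1) by auto
    then have "nonneg_pt (mat2_apply (beta q R) (1, 0))"
      using beta_quadrant_pt[OF q_pos R(4) False] by (simp add: quadrant_pt_def)
    then show ?thesis
      by (auto simp: nonneg_pt_def quadrant_pt_def)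
  qed (simp add: quadrant_pt_def)
  then have u:
      "nonneg_pt (mat2_apply (mat2_npow (sigma2 q) (nat d)) (mat2_apply (beta q R) (1, 0)))"
    "hom_value (mat2_apply (mat2_npow (sigma2 q) (nat d)) (mat2_apply (beta q R) (1, 0)))
      \<le> q ^ (nat d - 1)"
    using sigma2_npow_quadrant[OF q_pos, of _ "nat d"] R(2) by auto
  have "1 / (w - 1) \<le> of_int d + 1" if "c = 1"
  proof -
    have "cf_pos (d # R)"
      using R by (simp add: cf_pos_Cons)
    moreover have "w = 1 + 1 / cf_eval (d # R)"
      using W(3) cdR that by (simp add: cf_eval_Cons)
    ultimately show ?thesis
      using cf_pos_eval_bounds[of d R] by simp
  qed
  then show ?thesis
    using that[OF \<open>1 \<le> c\<close> c R(2) u] R(2,3) by (simp add: cdR mat2_apply_beta_Cons2 del: beta.simps)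
qed

lemma qrat_sharp_gt_1_bounds:
  fixes w :: rat
  assumes "1 < w"
  shows "nonneg_pt (mat2_apply (beta q (cf_expansion w)) (1, 0))"
    "0 \<le> qrat_sharp q w" "qrat_sharp q w \<le> 1 / (1 - q)"
proof -
  obtain c d u where u: "nonneg_pt u" "hom_value u \<le> q ^ (nat d - 1)"
    and W: "mat2_apply (beta q (cf_expansion w)) (1, 0)
        = mat2_apply (mat2_npow (sigma1_inv q) (nat c)) u"
    using qrat_sharp_gt_1_cases[OF assms] by metis
  show "nonneg_pt (mat2_apply (beta q (cf_expansion w)) (1, 0))"
    using W mat2_npow_preserves[of nonneg_pt, OF nonneg_pt_sigma1_inv[OF q_pos] u(1)] by simp
  have "q ^ (nat d - 1) \<le> 1" "q ^ nat c \<le> 1" "1 \<le> 1 / (1 - q)"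
    using q_pos q_less_1 by (simp_all add: power_le_one)
  define D where "D = hom_value u - 1 / (1 - q)"
  then have D: "- (1 / (1 - q)) \<le> D" "D \<le> 0"
    using u nonneg_pt_hom_value[OF u(1)] \<open>q ^ (nat d - 1) \<le> 1\<close> \<open>1 \<le> 1 / (1 - q)\<close> by linarith+
  have "D \<le> q ^ nat c * D" "q ^ nat c * D \<le> 0"
    using mult_right_mono_neg[OF \<open>q ^ nat c \<le> 1\<close> D(2)]
      mult_nonneg_nonpos[OF _ D(2), of "q ^ nat c"] q_pos
    by simp_all
  then have "0 \<le> 1 / (1 - q) + q ^ nat c * D" "1 / (1 - q) + q ^ nat c * D \<le> 1 / (1 - q)"
    using D by linarith+
  then show "0 \<le> qrat_sharp q w" "qrat_sharp q w \<le> 1 / (1 - q)"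
    using sigma1_inv_npow_value[OF q_pos _ u(1), of "nat c"] q_less_1 W
    by (simp_all add: qrat_sharp_eq D_def)
qed

lemma qrat_sharp_large_arg:
  fixes w :: rat
  assumes "of_nat N + 1 < w"
  shows "\<bar>qrat_sharp q w - 1 / (1 - q)\<bar> \<le> q ^ N / (1 - q)"
proof -
  have "1 < w"
    using assms of_nat_0_le_iff[of N] by linarith
  obtain c d u where c: "of_int c < w" "w \<le> of_int c + 1" and u: "nonneg_pt u"
      "hom_value u \<le> q ^ (nat d - 1)"
    and W: "mat2_apply (beta q (cf_expansion w)) (1, 0)
        = mat2_apply (mat2_npow (sigma1_inv q) (nat c)) u"
    using qrat_sharp_gt_1_cases[OF \<open>1 < w\<close>] by metis
  have "of_int (int N) < (of_int c :: rat)"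
    using assms c(2) by simp
  then have "N \<le> nat c"
    by (simp only: of_int_less_iff)
  have "q ^ (nat d - 1) \<le> 1" "1 \<le> 1 / (1 - q)"
    using q_pos q_less_1 by (simp_all add: power_le_one)
  then have "\<bar>hom_value u - 1 / (1 - q)\<bar> \<le> 1 / (1 - q)"
    using u nonneg_pt_hom_value[OF u(1)] by linarith
  have "\<bar>qrat_sharp q w - 1 / (1 - q)\<bar> = q ^ nat c * \<bar>hom_value u - 1 / (1 - q)\<bar>"
    using sigma1_inv_npow_value[OF q_pos _ u(1), of "nat c"] q_pos q_less_1 W
    by (simp add: qrat_sharp_eq abs_mult)
  also have "\<dots> \<le> q ^ nat c * (1 / (1 - q))"
    using \<open>\<bar>hom_value u - 1 / (1 - q)\<bar> \<le> 1 / (1 - q)\<close> q_pos by (intro mult_left_mono) simp_all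
  also have "\<dots> \<le> q ^ N * (1 / (1 - q))"
    using \<open>N \<le> nat c\<close> q_pos q_less_1 by (intro mult_right_mono power_decreasing) simp_all
  finally show ?thesis
    by simp
qed

lemma qrat_sharp_arg_near_1:
  fixes w :: rat
  assumes "1 < w" "w \<le> 1 + 1 / (of_nat N + 2)"
  shows "\<bar>qrat_sharp q w - 1\<bar> \<le> q ^ N"
proof -
  obtain c d u where "1 \<le> c" "of_int c < w" "1 \<le> d" and u: "nonneg_pt u"
      "hom_value u \<le> q ^ (nat d - 1)"
    and W: "mat2_apply (beta q (cf_expansion w)) (1, 0)
        = mat2_apply (mat2_npow (sigma1_inv q) (nat c)) u"
    and d: "c = 1 \<Longrightarrow> 1 / (w - 1) \<le> of_int d + 1"
    using qrat_sharp_gt_1_cases[OF assms(1)] by metis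
  have "1 / (of_nat N + 2) \<le> (1 :: rat)"
    by simp
  then have "of_int c < (2 :: rat)"
    using \<open>of_int c < w\<close> assms(2) by linarith
  then have "c = 1"
    using \<open>1 \<le> c\<close> by simp
  have "of_nat N + 2 \<le> 1 / (w - 1)"
    using assms by (simp add: le_divide_eq divide_le_eq field_simps)
  then have "of_int (int N + 1) \<le> (of_int d :: rat)"
    using d[OF \<open>c = 1\<close>] by simp
  then have "N \<le> nat d"
    by (simp only: of_int_le_iff)
  have "snd u \<noteq> 0"
    using u(1) by (simp add: nonneg_pt_def)
  then have "qrat_sharp q w = q * hom_value u + 1"
    using W \<open>c = 1\<close> by (simp add: qrat_sharp_eq hom_value_sigma1_inv[OF q_pos])
  then have "\<bar>qrat_sharp q w - 1\<bar> = q * hom_value u"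
    using nonneg_pt_hom_value[OF u(1)] q_pos by simp
  also have "\<dots> \<le> q * q ^ (nat d - 1)"
    using u(2) q_pos by simp
  also have "\<dots> = q ^ nat d"
    using \<open>1 \<le> d\<close> by (simp flip: power_Suc)
  also have "\<dots> \<le> q ^ N"
    using \<open>N \<le> nat d\<close> q_pos q_less_1 by (simp add: power_decreasing)
  finally show ?thesis .
qed

end

section \<open>Rationals whose expansion has a prescribed prefix\<close>

lemma moebius_inverse_gt:
  fixes p p' r r' s y :: real
  assumes "0 < r * s + r'" "0 < p - r * y" "(p * s + p') / (r * s + r') < y"
  shows "s < (r' * y - p') / (p - r * y)"
  using assms by (simp add: field_simps)

lemma moebius_inverse_lt:
  fixes p p' r r' t y :: real
  assumes "0 < r * t + r'" "0 < p - r * y" "y < (p * t + p') / (r * t + r')"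
  shows "(r' * y - p') / (p - r * y) < t"
  using assms by (simp add: field_simps)

lemma moebius_below_pole:
  fixes p p' r r' t y :: real
  assumes "p * r' - p' * r = 1" "0 \<le> r" "0 < r * t + r'" "y \<le> (p * t + p') / (r * t + r')"
  shows "r * y < p"
proof -
  have "r * y \<le> r * ((p * t + p') / (r * t + r'))"
    by (rule mult_left_mono[OF assms(4) assms(2)])
  also have "\<dots> < p"
    using assms(1,3) by (simp add: field_simps)
  finally show ?thesis .
qed

lemma moebius_strict_mono:
  fixes p p' r r' s t :: real
  assumes "p * r' - p' * r = 1" "0 < r * s + r'" "0 < r * t + r'" "s < t"
  shows "(p * s + p') / (r * s + r') < (p * t + p') / (r * t + r')"
proof -
  have "(p * t + p') * (r * s + r') - (p * s + p') * (r * t + r') = (t - s) * (p * r' - p' * r)"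
    by (simp add: algebra_simps)
  then have "(p * s + p') * (r * t + r') < (p * t + p') * (r * s + r')"
    using assms(1,4) by simp
  then show ?thesis
    using assms(2,3) by (simp add: divide_less_eq less_divide_eq mult.commute)
qed

lemma cf_eval_prefix:
  assumes "even (length P)" "\<forall>e\<in>set P. 0 \<le> e" "0 < w"
  shows "real_of_rat (cf_eval (P @ cf_expansion w))
      = hom_value (mat2_apply (beta 1 P) (real_of_rat w, 1))"
proof -
  let ?W = "cf_expansion w"
  have W: "even (length ?W)" "?W \<noteq> []" "\<forall>e\<in>set ?W. 0 \<le> e" "1 \<le> last ?W"
    using cf_expansion_pos[OF assms(3)] cf_pos_even_entries by auto
  obtain X Y where XY: "mat2_apply (beta 1 ?W) (1, 0) = (X, Y)"
    by (cases "mat2_apply (beta 1 ?W) (1, 0)")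
  have "0 < Y" "real_of_rat w = X / Y"
    using cf_eval_eq_beta_1_pos[OF W] cf_expansion_pos[OF assms(3)] XY by (auto simp: hom_value_def)
  then have XY': "(X, Y) = (Y * real_of_rat w, Y * 1)"
    by simp
  note XY = XY[unfolded XY']
  have PW: "P @ ?W \<noteq> []" "\<forall>e\<in>set (P @ ?W). 0 \<le> e" "1 \<le> last (P @ ?W)" "even (length (P @ ?W))"
    using assms(1,2) W by auto
  have "real_of_rat (cf_eval (P @ ?W)) = hom_value (mat2_apply (beta 1 (P @ ?W)) (1, 0))"
    using cf_eval_eq_beta_1_pos[OF PW(4,1,2,3)] by simp
  also have "\<dots> = hom_value (mat2_apply (beta 1 P) (Y * real_of_rat w, Y * 1))"
    by (simp only: beta_append[OF assms(1)] mat2_apply_mult XY)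
  finally show ?thesis
    using hom_value_apply_scale_vec[of Y "beta 1 P" "real_of_rat w" 1] \<open>0 < Y\<close> by simp
qed

lemma qrat_sharp_cf_eval_prefix:
  assumes "even (length P)" "\<forall>e\<in>set P. 0 \<le> e" "0 < w"
  shows "qrat_sharp q (cf_eval (P @ cf_expansion w)) =
    hom_value (mat2_apply (beta q P) (mat2_apply (beta q (cf_expansion w)) (1, 0)))"
proof -
  let ?W = "cf_expansion w"
  have W: "even (length ?W)" "?W \<noteq> []" "\<forall>e\<in>set ?W. 0 \<le> e" "1 \<le> last ?W"
    using cf_expansion_pos[OF assms(3)] cf_pos_even_entries by auto
  then have PW: "P @ ?W \<noteq> []" "\<forall>e\<in>set (P @ ?W). 0 \<le> e" "1 \<le> last (P @ ?W)" "even (length (P @ ?W))"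
    using assms(1,2) by auto
  have valid: "cf_valid (merge_zeros (P @ ?W))"
    using merge_zeros_cf_pos[OF PW(1-3)] PW(4) by (simp add: cf_valid_if_cf_pos)
  have "cf_expansion (cf_eval (P @ ?W)) = merge_zeros (P @ ?W)"
    using cf_expansion_cf_eval[OF valid] by (simp add: cf_eval_merge_zeros)
  moreover have "beta q (merge_zeros (P @ ?W)) = mat2_mult (beta q P) (beta q ?W)"
    using beta_merge_zeros[OF PW(2,4)] merge_zeros_cf_pos[OF PW(1-3)] PW(4)
    by (simp add: beta_append[OF assms(1)])
  ultimately show ?thesis
    by (simp add: qrat_sharp_eq mat2_apply_mult)
qed

lemma qrat_sharp_prefix:
  fixes y :: rat
  assumes P: "even (length P)" "\<forall>e\<in>set P. 0 \<le> e" "beta 1 P = (p, p', r, r')"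
    and "r * real_of_rat y < p" "0 < (r' * real_of_rat y - p') / (p - r * real_of_rat y)"
  obtains w where "real_of_rat w = (r' * real_of_rat y - p') / (p - r * real_of_rat y)"
    "qrat_sharp q y
      = hom_value (mat2_apply (beta q P) (mat2_apply (beta q (cf_expansion w)) (1, 0)))"
proof -
  let ?y = "real_of_rat y"
  define wr where "wr = (r' * ?y - p') / (p - r * ?y)"
  have int: "p \<in> \<int>" "p' \<in> \<int>" "r \<in> \<int>" "r' \<in> \<int>" and det: "p * r' - p' * r = 1"
    using beta_1_int_det[OF P(1)] P(3) by auto
  have "wr \<in> \<rat>"
    unfolding wr_def using int
    by (intro Rats_divide Rats_diff Rats_mult) (auto intro: Ints_subset_Rats[THEN subsetD])
  then obtain w where w: "real_of_rat w = wr"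
    by (auto elim: Rats_cases)
  then have "0 < real_of_rat w"
    using assms(5) by (simp add: wr_def)
  then have "0 < w"
    by (simp only: zero_less_of_rat_iff)
  have "real_of_rat (cf_eval (P @ cf_expansion w)) = (p * wr + p') / (r * wr + r')"
    using cf_eval_prefix[OF P(1,2) \<open>0 < w\<close>] w by (simp add: P(3) mat2_apply_def hom_value_def)
  also have "\<dots> = ?y"
  proof -
    have "p * (r' * ?y - p') + p' * (p - r * ?y) = ?y * (p * r' - p' * r)"
      "r * (r' * ?y - p') + r' * (p - r * ?y) = p * r' - p' * r"
      by (simp_all add: algebra_simps)
    then show ?thesis
      using assms(4) det by (simp add: wr_def add_divide_distrib[symmetric] field_simps)
  qed
  finally have "cf_eval (P @ cf_expansion w) = y"
    by (simp only: of_rat_eq_iff)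
  then show ?thesis
    using that[of w] w qrat_sharp_cf_eval_prefix[OF P(1,2) \<open>0 < w\<close>] by (simp add: wr_def)
qed

section \<open>One-sided limits at positive rationals and limits at positive irrationals\<close>

lemma beta_decrement_last:
  assumes "even (length P)" "1 \<le> d"
  shows "mat2_apply (beta q (P @ [c, d])) (1, 0) = mat2_apply (beta q (P @ [c, d - 1])) (1, 1)"
proof -
  have "nat d = Suc (nat (d - 1))"
    using assms(2) by simp
  moreover have "mat2_apply (sigma2 q) (1, 0) = (1, 1)"
    by (simp add: sigma2_def mat2_apply_def)
  ultimately have "mat2_apply (mat2_ipow (sigma2 q) d) (1, 0)
      = mat2_apply (mat2_ipow (sigma2 q) (d - 1)) (1, 1)"
    using assms(2)
    by (simp add: mat2_ipow_nonneg mat2_npow_Suc_right mat2_apply_mult del: mat2_npow.simps)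
  then show ?thesis
    by (simp add: beta_append[OF assms(1)] mat2_apply_mult)
qed

lemma irrational_cf_step:
  fixes t :: real
  assumes "0 < t" "t \<notin> \<rat>"
  obtains c d t' Y where "0 \<le> c" "1 \<le> d" "1 < t'" "t' \<notin> \<rat>" "0 < Y"
    "mat2_apply (beta 1 [c, d]) (t', 1) = (Y * t, Y * 1)"
proof -
  define c where "c = \<lfloor>t\<rfloor>"
  define u where "u = 1 / (t - of_int c)"
  define d where "d = \<lfloor>u\<rfloor>"
  define t' where "t' = 1 / (u - of_int d)"
  have "t \<noteq> of_int c"
    using assms(2) by auto
  then have "0 < t - of_int c" "t - of_int c < 1"
    using of_int_floor_le[of t] real_of_int_floor_add_one_gt[of t] unfolding c_def by linarith+
  then have "1 < u"
    by (simp add: u_def)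
  have "u \<notin> \<rat>"
  proof
    assume "u \<in> \<rat>"
    then have "of_int c + 1 / u \<in> \<rat>"
      by simp
    then show False
      using assms(2) \<open>0 < t - of_int c\<close> by (simp add: u_def)
  qed
  then have "u \<noteq> of_int d"
    by auto
  then have "0 < u - of_int d" "u - of_int d < 1"
    using of_int_floor_le[of u] real_of_int_floor_add_one_gt[of u] unfolding d_def by linarith+
  then have "1 < t'"
    by (simp add: t'_def)
  have "t' \<notin> \<rat>"
  proof
    assume "t' \<in> \<rat>"
    then have "of_int d + 1 / t' \<in> \<rat>"
      by simp
    then show False
      using \<open>u \<notin> \<rat>\<close> \<open>0 < u - of_int d\<close> by (simp add: t'_def)
  qed
  have "0 \<le> c" "1 \<le> d"
    using assms(1) \<open>1 < u\<close> by (simp_all add: c_def d_def)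
  define Y where "Y = of_int d * t' + 1"
  have "0 < Y"
    using \<open>1 \<le> d\<close> \<open>1 < t'\<close> by (simp add: Y_def add_nonneg_pos)
  have "t = of_int c + 1 / (of_int d + 1 / t')"
    using \<open>0 < t - of_int c\<close> \<open>0 < u - of_int d\<close> by (simp add: t'_def u_def)
  then have "t' + of_int c * Y = Y * t"
    using \<open>0 < Y\<close> \<open>1 < t'\<close> by (simp add: Y_def field_simps)
  then have "mat2_apply (beta 1 [c, d]) (t', 1) = (Y * t, Y * 1)"
    using mat2_apply_beta_1_Cons2[of "[]" "(t', 1)" t' 1 c d] by (simp add: Y_def)
  then show ?thesis
    using that \<open>0 \<le> c\<close> \<open>1 \<le> d\<close> \<open>1 < t'\<close> \<open>t' \<notin> \<rat>\<close> \<open>0 < Y\<close> by blast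
qed

lemma irrational_cf_prefix:
  fixes t :: real
  assumes "0 < t" "t \<notin> \<rat>"
  shows "\<exists>P \<tau>. even (length P) \<and> (\<forall>e\<in>set P. 0 \<le> e) \<and> N \<le> entry_sum P \<and> 1 < \<tau> \<and> \<tau> \<notin> \<rat> \<and>
    t = hom_value (mat2_apply (beta 1 P) (\<tau>, 1))"
proof (induction N)
  case 0
  obtain c d t' Y where "0 \<le> c" "1 \<le> d" "1 < t'" "t' \<notin> \<rat>" "0 < Y"
    and step: "mat2_apply (beta 1 [c, d]) (t', 1) = (Y * t, Y * 1)"
    using irrational_cf_step[OF assms] .
  then show ?case
    by (intro exI[of _ "[c, d]"] exI[of _ t']) (simp add: step hom_value_def)
next
  case (Suc N)
  then obtain P \<tau> where P: "even (length P)" "\<forall>e\<in>set P. 0 \<le> e" "N \<le> entry_sum P" "1 < \<tau>" "\<tau> \<notin> \<rat>"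
    and t: "t = hom_value (mat2_apply (beta 1 P) (\<tau>, 1))"
    by blast
  obtain c d t' Y where cd: "0 \<le> c" "1 \<le> d" "1 < t'" "t' \<notin> \<rat>" "0 < Y"
    and step: "mat2_apply (beta 1 [c, d]) (t', 1) = (Y * \<tau>, Y * 1)"
    using irrational_cf_step[OF _ P(5)] P(4) by (metis less_trans zero_less_one)
  have "hom_value (mat2_apply (beta 1 (P @ [c, d])) (t', 1)) = t"
    using hom_value_apply_scale_vec[of Y "beta 1 P" \<tau> 1] cd(5)
    by (simp add: t beta_append[OF P(1)] mat2_apply_mult step del: beta.simps)
  moreover have "Suc N \<le> entry_sum (P @ [c, d])"
    using P(3) cd(2) by (simp add: entry_sum_def)
  ultimately show ?case
    using P cd by (intro exI[of _ "P @ [c, d]"] exI[of _ t']) auto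
qed

context
  fixes q :: real
  assumes q_pos: "0 < q" and q_less_1: "q < 1"
begin

lemma qrat_sharp_prefix_contraction:
  fixes y :: rat
  assumes P: "even (length P)" "\<forall>e\<in>set P. 0 \<le> e" "beta 1 P = (p, p', r, r')"
    and "r * real_of_rat y < p" "1 < (r' * real_of_rat y - p') / (p - r * real_of_rat y)"
  obtains w where "real_of_rat w = (r' * real_of_rat y - p') / (p - r * real_of_rat y)" "1 < w"
    "qrat_sharp q y
      = hom_value (mat2_apply (beta q P) (mat2_apply (beta q (cf_expansion w)) (1, 0)))"
    "\<And>v. nonneg_pt v \<Longrightarrow>
      \<bar>qrat_sharp q y - hom_value (mat2_apply (beta q P) v)\<bar>
        \<le> q ^ entry_sum P * \<bar>qrat_sharp q w - hom_value v\<bar>"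
proof -
  obtain w where w: "real_of_rat w = (r' * real_of_rat y - p') / (p - r * real_of_rat y)"
    and y: "qrat_sharp q y
        = hom_value (mat2_apply (beta q P) (mat2_apply (beta q (cf_expansion w)) (1, 0)))"
    using qrat_sharp_prefix[OF P assms(4)] assms(5) by auto
  have "1 < real_of_rat w"
    using w assms(5) by simp
  then have "1 < w"
    by simp
  show ?thesis
  proof (rule that[OF w \<open>1 < w\<close> y])
    fix v
    assume "nonneg_pt v"
    then show "\<bar>qrat_sharp q y - hom_value (mat2_apply (beta q P) v)\<bar>
      \<le> q ^ entry_sum P * \<bar>qrat_sharp q w - hom_value v\<bar>"
      using beta_lipschitz[OF q_pos P(1,2) qrat_sharp_gt_1_bounds(1)[OF q_pos q_less_1 \<open>1 < w\<close>]] y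
      by (simp add: qrat_sharp_eq)
  qed
qed

lemma qrat_sharp_right_window:
  fixes x :: rat
  assumes "0 < x"
  obtains b where "real_of_rat x < b"
    "\<And>y. x < y \<Longrightarrow> real_of_rat y < b \<Longrightarrow> \<bar>qrat_sharp q y - qrat_sharp q x\<bar> \<le> q ^ N"
proof -
  let ?a = "cf_expansion x"
  have a: "even (length ?a)" "?a \<noteq> []" "\<forall>e\<in>set ?a. 0 \<le> e" "1 \<le> last ?a"
    using cf_expansion_pos[OF assms] cf_pos_even_entries by auto
  obtain P c d where Pcd: "?a = P @ [c, d]" "even (length P)"
  proof -
    obtain a' d where a': "?a = a' @ [d]"
      using a(2) rev_exhaust by blast
    moreover obtain P c where "a' = P @ [c]"
      using a(1) a' by (cases a' rule: rev_exhaust) auto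
    ultimately show ?thesis
      using that a(1) by auto
  qed
  define P' where "P' = P @ [c, d - 1]"
  have d: "1 \<le> d"
    using a(4) Pcd by simp
  have P': "even (length P')" "\<forall>e\<in>set P'. 0 \<le> e"
    using Pcd a(3) d by (auto simp: P'_def)
  obtain p p' r r' where M: "beta 1 P' = (p, p', r, r')" and det: "p * r' - p' * r = 1"
    and nonneg: "0 \<le> r" "0 \<le> r'" "0 < r + r'"
    using beta_1_cases[OF P'] by metis
  let ?m = "\<lambda>t. (p * t + p') / (r * t + r')"
  have "real_of_rat x = hom_value (mat2_apply (beta 1 P') (1, 1))"
    using cf_eval_eq_beta_1_pos[OF a] beta_decrement_last[OF Pcd(2) d, of 1]
      cf_expansion_pos(3)[OF assms]
    by (simp add: Pcd P'_def)
  then have x: "real_of_rat x = ?m 1"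
    by (simp add: M mat2_apply_def hom_value_def)
  have sharp_x: "qrat_sharp q x = hom_value (mat2_apply (beta q P') (1, 1))"
    using beta_decrement_last[OF Pcd(2) d, of q] by (simp add: qrat_sharp_eq Pcd P'_def)
  define h :: real where "h = 1 / (real N + 2)"
  have "0 < h"
    by (simp add: h_def)
  have pos: "0 < r * t + r'" if "1 \<le> t" for t
    using nonneg mult_left_mono[OF that nonneg(1)] by linarith
  show ?thesis
  proof (rule that)
    show "real_of_rat x < ?m (1 + h)"
      using x moebius_strict_mono[OF det pos pos, of 1 "1 + h"] \<open>0 < h\<close> by simp
    fix y
    assume y: "x < y" "real_of_rat y < ?m (1 + h)"
    have pole: "r * real_of_rat y < p"
      using moebius_below_pole[OF det nonneg(1) pos[of "1 + h"]] y(2) \<open>0 < h\<close> by simp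
    have "real_of_rat x < real_of_rat y"
      using y(1) by (simp add: of_rat_less)
    then have "1 < (r' * real_of_rat y - p') / (p - r * real_of_rat y)"
      by (intro moebius_inverse_gt) (use pos[of 1] pole x in simp_all)
    then obtain w where w: "real_of_rat w = (r' * real_of_rat y - p') / (p - r * real_of_rat y)"
      "1 < w"
      and contr: "\<And>v. nonneg_pt v \<Longrightarrow>
        \<bar>qrat_sharp q y - hom_value (mat2_apply (beta q P') v)\<bar>
          \<le> q ^ entry_sum P' * \<bar>qrat_sharp q w - hom_value v\<bar>"
      using qrat_sharp_prefix_contraction[OF P' M pole] by metis
    have "real_of_rat w < 1 + h"
      unfolding w(1)
      by (rule moebius_inverse_lt) (use pos[of "1 + h"] pole y(2) \<open>0 < h\<close> in simp_all)
    moreover have "real_of_rat (1 + 1 / (of_nat N + 2)) = 1 + h"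
      by (simp add: h_def of_rat_add of_rat_divide)
    ultimately have "w \<le> 1 + 1 / (of_nat N + 2)"
      by (metis of_rat_less less_imp_le)
    have "\<bar>qrat_sharp q y - qrat_sharp q x\<bar> \<le> q ^ entry_sum P' * \<bar>qrat_sharp q w - 1\<bar>"
      using contr[of "(1, 1)"] by (simp add: sharp_x nonneg_pt_def hom_value_def)
    also have "\<dots> \<le> 1 * q ^ N"
      using qrat_sharp_arg_near_1[OF q_pos q_less_1 w(2) \<open>w \<le> 1 + 1 / (of_nat N + 2)\<close>] q_pos q_less_1
      by (intro mult_mono) (simp_all add: power_le_one)
    finally show "\<bar>qrat_sharp q y - qrat_sharp q x\<bar> \<le> q ^ N"
      by simp
  qed
qed

lemma qrat_sharp_left_window:
  fixes x :: rat
  assumes "0 < x"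
  obtains a where "a < real_of_rat x"
    "\<And>y. a < real_of_rat y \<Longrightarrow> y < x \<Longrightarrow> \<bar>qrat_sharp q y - qrat_flat q x\<bar> \<le> q ^ N / (1 - q)"
proof -
  let ?P = "cf_expansion x"
  have P: "even (length ?P)" "?P \<noteq> []" "\<forall>e\<in>set ?P. 0 \<le> e" "1 \<le> last ?P"
    using cf_expansion_pos[OF assms] cf_pos_even_entries by auto
  obtain p p' r r' where M: "beta 1 ?P = (p, p', r, r')" and det: "p * r' - p' * r = 1"
    and nonneg: "0 \<le> r" "0 \<le> r'"
    using beta_1_cases[OF P(1,3)] by metis
  have "0 < r" and x: "real_of_rat x = p / r"
    using cf_eval_eq_beta_1_pos[OF P] cf_expansion_pos(3)[OF assms]
    by (simp_all add: M mat2_apply_def hom_value_def)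
  let ?m = "\<lambda>t. (p * t + p') / (r * t + r')"
  have pos: "0 < r * t + r'" if "1 \<le> t" for t
    using \<open>0 < r\<close> nonneg mult_left_mono[OF that, of r] by linarith
  show ?thesis
  proof (rule that)
    show "?m (real N + 1) < real_of_rat x"
      using moebius_below_pole[OF det nonneg(1) pos, of "real N + 1" "?m (real N + 1)"] \<open>0 < r\<close>
      by (simp add: x field_simps)
    fix y
    assume y: "?m (real N + 1) < real_of_rat y" "y < x"
    have "real_of_rat y < p / r"
      using y(2) x by (metis of_rat_less)
    then have pole: "r * real_of_rat y < p"
      using \<open>0 < r\<close> by (simp add: field_simps)
    have "real N + 1 < (r' * real_of_rat y - p') / (p - r * real_of_rat y)"
      by (rule moebius_inverse_gt) (use pos[of "real N + 1"] pole y(1) in simp_all)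
    then have "1 < (r' * real_of_rat y - p') / (p - r * real_of_rat y)"
      by (smt (verit) of_nat_0_le_iff)
    then obtain w where w: "real_of_rat w = (r' * real_of_rat y - p') / (p - r * real_of_rat y)"
      and contr: "\<And>v. nonneg_pt v \<Longrightarrow>
        \<bar>qrat_sharp q y - hom_value (mat2_apply (beta q ?P) v)\<bar>
          \<le> q ^ entry_sum ?P * \<bar>qrat_sharp q w - hom_value v\<bar>"
      using qrat_sharp_prefix_contraction[OF P(1,3) M pole] by blast
    have "real_of_rat (of_nat N + 1) < real_of_rat w"
      using w \<open>real N + 1 < _\<close> by (simp add: of_rat_add)
    then have "of_nat N + 1 < w"
      by (simp only: of_rat_less)
    have "nonneg_pt (1 / (1 - q), 1)"
      using q_less_1 by (simp add: nonneg_pt_def)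
    then have "\<bar>qrat_sharp q y - qrat_flat q x\<bar> \<le> q ^ entry_sum ?P * \<bar>qrat_sharp q w - 1 / (1 - q)\<bar>"
      using contr[of "(1 / (1 - q), 1)"] by (simp add: qrat_flat_eq[OF q_less_1] hom_value_def)
    also have "\<dots> \<le> 1 * (q ^ N / (1 - q))"
      using qrat_sharp_large_arg[OF q_pos q_less_1 \<open>of_nat N + 1 < w\<close>] q_pos q_less_1
      by (intro mult_mono) (simp_all add: power_le_one)
    finally show "\<bar>qrat_sharp q y - qrat_flat q x\<bar> \<le> q ^ N / (1 - q)"
      by simp
  qed
qed

lemma qrat_sharp_irrational_window:
  fixes t :: real
  assumes "0 < t" "t \<notin> \<rat>"
  obtains a b where "a < t" "t < b"
    "\<And>y y'. a < real_of_rat y \<Longrightarrow> real_of_rat y < b \<Longrightarrow> a < real_of_rat y' \<Longrightarrow> real_of_rat y' < b \<Longrightarrow>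
      \<bar>qrat_sharp q y - qrat_sharp q y'\<bar> \<le> q ^ N / (1 - q)"
proof -
  obtain P \<tau> where P: "even (length P)" "\<forall>e\<in>set P. 0 \<le> e" "N \<le> entry_sum P" "1 < \<tau>"
    and t: "t = hom_value (mat2_apply (beta 1 P) (\<tau>, 1))"
    using irrational_cf_prefix[OF assms] by blast
  obtain p p' r r' where M: "beta 1 P = (p, p', r, r')" and det: "p * r' - p' * r = 1"
    and nonneg: "0 \<le> r" "0 \<le> r'" "0 < r + r'"
    using beta_1_cases[OF P(1,2)] by metis
  let ?m = "\<lambda>t. (p * t + p') / (r * t + r')"
  have pos: "0 < r * s + r'" if "1 \<le> s" for s
    using nonneg mult_left_mono[OF that nonneg(1)] by linarith
  have t: "t = ?m \<tau>"
    by (simp add: t M mat2_apply_def hom_value_def)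
  have inside: "\<exists>u. nonneg_pt u \<and> 0 \<le> hom_value u \<and> hom_value u \<le> 1 / (1 - q) \<and>
      qrat_sharp q y = hom_value (mat2_apply (beta q P) u)"
    if "?m 1 < real_of_rat y" "real_of_rat y < ?m (\<tau> + 1)" for y
  proof -
    have pole: "r * real_of_rat y < p"
      using moebius_below_pole[OF det nonneg(1) pos[of "\<tau> + 1"]] that(2) P(4) by simp
    have "1 < (r' * real_of_rat y - p') / (p - r * real_of_rat y)"
      by (rule moebius_inverse_gt) (use pos[of 1] pole that(1) in simp_all)
    then obtain w where "1 < w"
      and y: "qrat_sharp q y
          = hom_value (mat2_apply (beta q P) (mat2_apply (beta q (cf_expansion w)) (1, 0)))"
      using qrat_sharp_prefix_contraction[OF P(1,2) M pole] by blast
    then show ?thesis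
      using qrat_sharp_gt_1_bounds[OF q_pos q_less_1 \<open>1 < w\<close>]
      by (intro exI[of _ "mat2_apply (beta q (cf_expansion w)) (1, 0)"]) (simp add: qrat_sharp_eq)
  qed
  show ?thesis
  proof (rule that)
    show "?m 1 < t" "t < ?m (\<tau> + 1)"
      using moebius_strict_mono[OF det pos pos, of 1 \<tau>]
        moebius_strict_mono[OF det pos pos, of \<tau> "\<tau> + 1"] P(4)
      by (simp_all add: t)
    fix y y'
    assume "?m 1 < real_of_rat y" "real_of_rat y < ?m (\<tau> + 1)"
      "?m 1 < real_of_rat y'" "real_of_rat y' < ?m (\<tau> + 1)"
    then obtain u u' where u: "nonneg_pt u" "0 \<le> hom_value u" "hom_value u \<le> 1 / (1 - q)"
        "qrat_sharp q y = hom_value (mat2_apply (beta q P) u)"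
      and u': "nonneg_pt u'" "0 \<le> hom_value u'" "hom_value u' \<le> 1 / (1 - q)"
        "qrat_sharp q y' = hom_value (mat2_apply (beta q P) u')"
      using inside by metis
    have "\<bar>qrat_sharp q y - qrat_sharp q y'\<bar> \<le> q ^ entry_sum P * \<bar>hom_value u - hom_value u'\<bar>"
      using beta_lipschitz[OF q_pos P(1,2) u(1) u'(1)] u(4) u'(4) by simp
    also have "\<dots> \<le> q ^ N * (1 / (1 - q))"
      using u u' q_pos q_less_1 P(3) by (intro mult_mono power_decreasing) auto
    finally show "\<bar>qrat_sharp q y - qrat_sharp q y'\<bar> \<le> q ^ N / (1 - q)"
      by simp
  qed
qed

end

section \<open>Translation by one\<close>

definition garside :: "real \<Rightarrow> mat2" where
  "garside q = mat2_mult (sigma1 q) (mat2_mult (sigma2 q) (sigma1 q))"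

definition neg_pt :: "real \<times> real \<Rightarrow> bool" where
  "neg_pt v \<longleftrightarrow> 0 < fst v \<and> snd v < 0"

definition below_diag_pt :: "real \<times> real \<Rightarrow> bool" where
  "below_diag_pt v \<longleftrightarrow> 0 < fst v \<and> snd v < fst v"

fun decr_hd :: "int list \<Rightarrow> int list" where
  "decr_hd [] = []"
| "decr_hd (k # l) = (k - 1) # l"

definition decr_last :: "int list \<Rightarrow> int list" where
  "decr_last l = butlast l @ [last l - 1]"

context
  fixes q :: real
  assumes q_pos: "0 < q"
begin

lemma garside_eq: "garside q = (0, - 1 / q\<^sup>2, 1 / q, 0)"
  using q_pos
  by (simp add: garside_def sigma1_def sigma2_def mat2_mult_def field_simps power2_eq_square)

lemma garside_sigma1: "mat2_mult (garside q) (sigma1 q) = mat2_mult (sigma2 q) (garside q)"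
  and garside_sigma2: "mat2_mult (garside q) (sigma2 q) = mat2_mult (sigma1 q) (garside q)"
  and garside_sigma1_inv: "mat2_mult (garside q) (sigma1_inv q)
      = mat2_mult (sigma2_inv q) (garside q)"
  and garside_sigma2_inv: "mat2_mult (garside q) (sigma2_inv q)
      = mat2_mult (sigma1_inv q) (garside q)"
  using q_pos
  by (simp_all add: garside_eq sigma1_def sigma2_def mat2_mult_def mat2_adj_def field_simps
    power2_eq_square)

lemma garside_ipow_sigma1: "mat2_mult (garside q) (mat2_ipow (sigma1 q) k)
    = mat2_mult (mat2_ipow (sigma2 q) k) (garside q)"
  and garside_ipow_sigma2: "mat2_mult (garside q) (mat2_ipow (sigma2 q) k)
      = mat2_mult (mat2_ipow (sigma1 q) k) (garside q)"
  by (simp_all add: mat2_ipow_def mat2_npow_intertwine garside_sigma1 garside_sigma2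
      garside_sigma1_inv garside_sigma2_inv)

lemma garside_sigma_word:
  "mat2_mult (garside q) (sigma_word q s l)
    = mat2_mult (sigma_word q (\<not> s) (map uminus l)) (garside q)"
proof (induction l arbitrary: s)
  case (Cons k l)
  have IH: "mat2_mult (mat2_mult X (garside q)) (sigma_word q s l) =
      mat2_mult (mat2_mult X (sigma_word q (\<not> s) (map uminus l))) (garside q)" for X s
    using Cons.IH by (simp add: mat2_mult_assoc)
  show ?case
    by (cases s) (simp_all add: garside_ipow_sigma1 garside_ipow_sigma2 IH flip: mat2_mult_assoc)
qed simp

lemma sigma_word_uminus:
  "sigma_word q True (map uminus l) =
    mat2_scale (q ^ 3)
      (mat2_mult (garside q) (mat2_mult (sigma_word q False l) (mat2_adj (garside q))))"
proof -
  have "mat2_det (garside q) = 1 / q ^ 3"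
    using q_pos by (simp add: garside_eq mat2_det_def field_simps power3_eq_cube power2_eq_square)
  have "mat2_mult (garside q) (mat2_mult (sigma_word q False l) (mat2_adj (garside q))) =
      mat2_mult (mat2_mult (sigma_word q True (map uminus l)) (garside q)) (mat2_adj (garside q))"
    using garside_sigma_word[of False l] by (simp flip: mat2_mult_assoc)
  also have "\<dots> = mat2_scale (1 / q ^ 3) (sigma_word q True (map uminus l))"
    using \<open>mat2_det (garside q) = 1 / q ^ 3\<close>
    by (simp add: mat2_mult_assoc mat2_mult_adj mat2_mult_scale_right)
  finally show ?thesis
    using q_pos by (simp add: mat2_scale_scale)
qed

lemma sigma2_sigma1_garside:
  "mat2_mult (mat2_mult (sigma2 q) (sigma1 q)) (garside q) = mat2_scale (- 1 / q\<^sup>2) (sigma1_inv q)"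
  and garside_inv_sigma1_sigma2:
  "mat2_mult (mat2_adj (garside q)) (mat2_mult (sigma1 q) (sigma2 q))
    = mat2_scale (1 / q\<^sup>2) (sigma1_inv q)"
  using q_pos
  by (simp_all add: garside_eq sigma1_def sigma2_def mat2_mult_def mat2_adj_def mat2_scale_def
      field_simps power2_eq_square)

lemma mat2_det_sigma1: "mat2_det (sigma1 q) \<noteq> 0"
  using q_pos by (simp add: sigma1_def mat2_det_def)

lemma sigma_word_decr_hd:
  assumes "C \<noteq> []"
  obtains s where "s \<noteq> 0"
      "sigma_word q True (decr_hd C) = mat2_scale s (mat2_mult (sigma1 q) (sigma_word q True C))"
proof -
  obtain k l where C: "C = k # l"
    using assms by (cases C) auto
  obtain s where "s \<noteq> 0"
      "mat2_mult (sigma1 q) (mat2_ipow (sigma1 q) (- k))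
        = mat2_scale s (mat2_ipow (sigma1 q) (- k + 1))"
    using mat2_mult_ipow[OF mat2_det_sigma1] by blast
  then have "sigma_word q True (decr_hd C)
      = mat2_scale (1 / s) (mat2_mult (sigma1 q) (sigma_word q True C))"
    by (simp add: C mat2_mult_scale_left mat2_scale_scale flip: mat2_mult_assoc)
  then show ?thesis
    using that[of "1 / s"] \<open>s \<noteq> 0\<close> by simp
qed

lemma sigma_word_decr_last:
  assumes "odd (length C)"
  obtains s where "s \<noteq> 0"
      "sigma_word q True (decr_last C) = mat2_scale s (mat2_mult (sigma_word q True C) (sigma1 q))"
proof -
  obtain l m where C: "C = l @ [m]" "even (length l)"
    using assms by (cases C rule: rev_exhaust) auto
  obtain s where "s \<noteq> 0"
      "mat2_mult (mat2_ipow (sigma1 q) (- m)) (sigma1 q)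
        = mat2_scale s (mat2_ipow (sigma1 q) (- m + 1))"
    using mat2_ipow_mult[OF mat2_det_sigma1] by blast
  then have "sigma_word q True (decr_last C)
      = mat2_scale (1 / s) (mat2_mult (sigma_word q True C) (sigma1 q))"
    using C(2)
    by (simp add: C decr_last_def sigma_word_append mat2_mult_scale_right mat2_scale_scale
      mat2_mult_assoc)
  then show ?thesis
    using that[of "1 / s"] \<open>s \<noteq> 0\<close> by simp
qed

lemma beta_decr_conj:
  assumes "odd (length C)"
  obtains s where "s \<noteq> 0" "beta q ([0, 1] @ decr_last (decr_hd C) @ [1]) =
    mat2_scale s (mat2_mult (sigma1_inv q) (mat2_mult (beta q (0 # map uminus C)) (sigma1_inv q)))"
proof -
  let ?C' = "decr_last (decr_hd C)" and ?X = "sigma_word q False (map uminus C)"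
  have "C \<noteq> []" "odd (length (decr_hd C))"
    using assms by (cases C; simp)+
  then have "odd (length ?C')"
    by (simp add: decr_last_def)
  then have beta_L: "beta q ([0, 1] @ ?C' @ [1])
      = mat2_mult (sigma2 q) (mat2_mult (sigma_word q True ?C') (sigma2 q))"
    by (simp add: beta_eq_sigma_word sigma_word_append mat2_ipow_nonneg)
  have beta_C: "beta q (0 # map uminus C) = ?X"
    using assms by (simp add: beta_eq_sigma_word del: beta.simps)
  obtain s1 where s1: "s1 \<noteq> 0"
      "sigma_word q True (decr_hd C) = mat2_scale s1 (mat2_mult (sigma1 q) (sigma_word q True C))"
    using sigma_word_decr_hd[OF \<open>C \<noteq> []\<close>] .
  obtain s2 where s2: "s2 \<noteq> 0"
      "sigma_word q True ?C' = mat2_scale s2 (mat2_mult (sigma_word q True (decr_hd C)) (sigma1 q))"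
    using sigma_word_decr_last[OF \<open>odd (length (decr_hd C))\<close>] .
  have C: "sigma_word q True C
      = mat2_scale (q ^ 3) (mat2_mult (garside q) (mat2_mult ?X (mat2_adj (garside q))))"
    using sigma_word_uminus[of "map uminus C"] by (simp add: comp_def)
  have "beta q ([0, 1] @ ?C' @ [1]) = mat2_scale (s2 * s1 * q ^ 3)
      (mat2_mult (mat2_mult (mat2_mult (sigma2 q) (sigma1 q)) (garside q))
        (mat2_mult ?X (mat2_mult (mat2_adj (garside q)) (mat2_mult (sigma1 q) (sigma2 q)))))"
    unfolding beta_L
    by (simp add: s2(2) s1(2) C mat2_mult_scale_left mat2_mult_scale_right mat2_scale_scale
        mat2_mult_assoc mult_ac del: beta.simps)
  also have "\<dots> = mat2_scale (- s2 * s1 * q ^ 3 / q ^ 4)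
      (mat2_mult (sigma1_inv q) (mat2_mult ?X (sigma1_inv q)))"
    by (simp add: sigma2_sigma1_garside garside_inv_sigma1_sigma2 mat2_mult_scale_left
      mat2_mult_scale_right
        mat2_scale_scale power4_eq_xxxx power2_eq_square mult_ac)
  finally show ?thesis
    using that[of "- s2 * s1 * q ^ 3 / q ^ 4"] s1(1) s2(1) q_pos by (simp add: beta_C)
qed

lemma beta_Cons_add_one:
  obtains s where "s \<noteq> 0"
      "beta q ((a + 1) # b # rest)
        = mat2_scale s (mat2_mult (sigma1_inv q) (beta q (a # b # rest)))"
proof -
  obtain s where "s \<noteq> 0"
      "mat2_mult (sigma1_inv q) (mat2_ipow (sigma1 q) (- a))
        = mat2_scale s (mat2_ipow (sigma1 q) (- a - 1))"
    using mat2_adj_mult_ipow[OF mat2_det_sigma1] by blast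
  then show ?thesis
    using that[of "1 / s"]
    by (simp add: mat2_mult_scale_left mat2_scale_scale flip: mat2_mult_assoc)
qed

lemma beta_neg_pt:
  "even (length L) \<Longrightarrow> cf_pos (map uminus L) \<Longrightarrow> below_diag_pt v \<Longrightarrow> neg_pt (mat2_apply (beta q L) v)"
proof (induction L rule: induct_list012)
  case (3 a b rest)
  have ab: "a \<le> 0" "b \<le> -1"
    using 3(4) by (auto simp: cf_pos_def)
  have neg_sigma1: "neg_pt (mat2_apply (sigma1 q) u)" if "neg_pt u" for u
    using that q_pos by (cases u) (simp add: neg_pt_def sigma1_def mat2_apply_def field_simps)
  have neg_sigma2_inv: "neg_pt (mat2_apply (sigma2_inv q) u)" if "below_diag_pt u" for u
    using that q_pos
    by (cases u) (simp add: neg_pt_def below_diag_pt_def sigma2_def mat2_adj_def mat2_apply_def)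
  have neg_below: "below_diag_pt u" if "neg_pt u" for u
    using that by (simp add: neg_pt_def below_diag_pt_def)
  have "below_diag_pt (mat2_apply (beta q rest) v)"
  proof (cases "rest = []")
    case False
    then have "cf_pos (map uminus rest)"
      using 3(4) by (cases rest) (auto simp: cf_pos_def)
    then show ?thesis
      using 3 neg_below by simp
  qed (use 3 in simp)
  then have "neg_pt
      (mat2_apply (mat2_npow (sigma2_inv q) (Suc (nat (- b - 1)))) (mat2_apply (beta q rest) v))"
    using mat2_npow_preserves[of neg_pt, OF neg_sigma2_inv[OF neg_below]] neg_sigma2_inv
    by (simp only: mat2_npow_Suc_right mat2_apply_mult)
  moreover have "Suc (nat (- b - 1)) = nat (- b)"
    using ab by simp
  ultimately show ?case
    using ab mat2_npow_preserves[of neg_pt, OF neg_sigma1] mat2_ipow_neg[of "- b" "sigma2 q"]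
    by (simp add: mat2_apply_mult mat2_ipow_nonneg)
qed (simp_all add: cf_pos_def)

lemma snd_beta_expansion_nonzero:
  assumes "q < 1" "v = (1, 0) \<or> v = (1, 1 - q)"
  shows "snd (mat2_apply (beta q (cf_expansion y)) v) \<noteq> 0"
proof (cases y "0 :: rat" rule: linorder_cases)
  case less
  have "below_diag_pt v"
    using assms q_pos by (auto simp: below_diag_pt_def)
  then show ?thesis
    using beta_neg_pt[OF cf_expansion_neg(2,1)[OF less] \<open>below_diag_pt v\<close>] by (simp add: neg_pt_def)
next
  case equal
  have "1 + (1 - q) / q \<noteq> 0"
    using assms(1) q_pos by (simp add: field_simps)
  then show ?thesis
    using equal assms q_pos
    by (auto simp: cf_expansion_def mat2_ipow_def mat2_id_def sigma1_def sigma2_def mat2_mult_def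
      mat2_apply_def)
next
  case greater
  have "quadrant_pt v"
    using assms by (auto simp: quadrant_pt_def)
  moreover have "even (length (cf_expansion y))" "cf_expansion y \<noteq> []"
    "\<forall>e\<in>set (cf_expansion y). 0 \<le> e" "1 \<le> last (cf_expansion y)"
    using cf_expansion_pos[OF greater] cf_pos_even_entries by auto
  ultimately have "nonneg_pt (mat2_apply (beta q (cf_expansion y)) v)"
    using beta_quadrant_pt[OF q_pos] by blast
  then show ?thesis
    by (simp add: nonneg_pt_def)
qed

text \<open>The points \<open>\<infinity>\<close> and \<open>1/(1 - q)\<close> are the fixed points of \<open>z \<mapsto> q z + 1\<close>.\<close>

lemma sigma1_inv_fixed_points:
  "mat2_apply (sigma1_inv q) (1, 0) = (1 * 1, 1 * 0)"
  "mat2_apply (sigma1_inv q) (1, 1 - q) = (1 / q * 1, 1 / q * (1 - q))"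
  using q_pos by (simp_all add: sigma1_inv_eq mat2_apply_def field_simps)

lemma hom_value_conj_sigma1_inv:
  assumes "s \<noteq> 0" "\<mu> \<noteq> 0" "mat2_apply B v = (\<mu> * fst v, \<mu> * snd v)" "snd (mat2_apply M v) \<noteq> 0"
  shows "hom_value (mat2_apply (mat2_scale s (mat2_mult (sigma1_inv q) (mat2_mult M B))) v) =
    q * hom_value (mat2_apply M v) + 1"
proof -
  have "mat2_apply M (mat2_apply B v) = (\<mu> * fst (mat2_apply M v), \<mu> * snd (mat2_apply M v))"
    using assms(3) mat2_apply_scale_vec[of M \<mu> "fst v" "snd v"] by simp
  then have "hom_value (mat2_apply (mat2_scale s (mat2_mult (sigma1_inv q) (mat2_mult M B))) v) =
      hom_value (mat2_apply (sigma1_inv q) (mat2_apply M v))"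
    using assms(1,2) hom_value_apply_scale_vec[of \<mu> "sigma1_inv q"]
    by (simp add: hom_value_apply_scale mat2_apply_mult)
  then show ?thesis
    using assms(4) by (simp add: hom_value_sigma1_inv[OF q_pos])
qed

end

text \<open>For \<open>-1 < y < 0\<close>, say \<open>y = [0, -c\<^sub>1, \<dots>, -c\<^sub>k]\<close>, the expansion of \<open>y + 1\<close> is
  \<open>[0, 1, c\<^sub>1 - 1, c\<^sub>2, \<dots>, c\<^sub>k - 1, 1]\<close> after merging zero entries.\<close>

lemma beta_expansion_add_one_between:
  assumes "0 < q" "y < 0" "cf_expansion y = 0 # b # rest" "\<not> (b = -1 \<and> rest = [])"
  obtains s where "s \<noteq> 0" "beta q (cf_expansion (y + 1)) =
    mat2_scale s (mat2_mult (sigma1_inv q) (mat2_mult (beta q (cf_expansion y)) (sigma1_inv q)))"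
proof -
  let ?L = "cf_expansion y"
  define C where "C = map uminus (b # rest)"
  have L: "even (length ?L)" "cf_pos (map uminus ?L)" "cf_eval ?L = y"
    using cf_expansion_neg[OF assms(2)] by auto
  then have C: "odd (length C)" "\<forall>e\<in>set C. 1 \<le> e" and LC: "?L = 0 # map uminus C"
    using assms(3) by (auto simp: C_def cf_pos_def comp_def)
  define C' where "C' = decr_last (decr_hd C)"
  have "\<forall>e\<in>set C'. 0 \<le> e"
  proof -
    obtain c l where cl: "C = c # l"
      using C(1) by (cases C) auto
    show ?thesis
    proof (cases "l = []")
      case True
      then have "2 \<le> c"
        using C(2) assms(4) cl by (auto simp: C_def)
      then show ?thesis
        using True by (simp add: C'_def cl decr_last_def)
    next
      case False
      have "\<forall>e\<in>set l. 1 \<le> e"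
        using C(2) cl by simp
      then have "0 < last l" "\<forall>e\<in>set (butlast l). 0 \<le> e"
        using last_in_set[OF False] by (fastforce dest: in_set_butlastD)+
      then show ?thesis
        using False C(2) cl by (auto simp: C'_def decr_last_def)
    qed
  qed
  moreover have "odd (length C')"
    using C(1) by (cases C) (auto simp: C'_def decr_last_def)
  ultimately have L': "even (length ([0, 1] @ C' @ [1]))" "[0, 1] @ C' @ [1] \<noteq> []"
    "\<forall>e\<in>set ([0, 1] @ C' @ [1]). 0 \<le> e" "1 \<le> last ([0, 1] @ C' @ [1])"
    by auto
  obtain s where "s \<noteq> 0" and s: "beta q ([0, 1] @ C' @ [1]) =
      mat2_scale s (mat2_mult (sigma1_inv q) (mat2_mult (beta q ?L) (sigma1_inv q)))"
    using beta_decr_conj[OF assms(1) C(1)] by (metis C'_def LC)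
  obtain s1 where "s1 \<noteq> 0" and s1: "beta 1 ([0, 1] @ C' @ [1]) =
      mat2_scale s1 (mat2_mult (sigma1_inv 1) (mat2_mult (beta 1 ?L) (sigma1_inv 1)))"
    using beta_decr_conj[OF zero_less_one C(1)] by (metis C'_def LC)
  have neg: "snd (mat2_apply (beta 1 ?L) (1, 0)) \<noteq> 0"
      "real_of_rat y = hom_value (mat2_apply (beta 1 ?L) (1, 0))"
    using cf_eval_eq_beta_1_neg[OF L(1,2)] L(3) by auto
  have "real_of_rat (cf_eval ([0, 1] @ C' @ [1]))
      = hom_value (mat2_apply (beta 1 ([0, 1] @ C' @ [1])) (1, 0))"
    using cf_eval_eq_beta_1_pos[OF L'] by blast
  also have "\<dots> = 1 * real_of_rat y + 1"
    using hom_value_conj_sigma1_inv[of 1 s1 1 "sigma1_inv 1" "(1, 0)" "beta 1 ?L"]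
      sigma1_inv_fixed_points(1)[of 1] \<open>s1 \<noteq> 0\<close> neg
    by (simp only: s1) simp
  also have "\<dots> = real_of_rat (y + 1)"
    by (simp add: of_rat_add)
  finally have "cf_eval ([0, 1] @ C' @ [1]) = y + 1"
    by (simp only: of_rat_eq_iff)
  moreover have "cf_pos (merge_zeros ([0, 1] @ C' @ [1]))"
    "even (length (merge_zeros ([0, 1] @ C' @ [1])))"
    using merge_zeros_cf_pos[OF L'(2-4)] L'(1) by auto
  ultimately have "cf_expansion (y + 1) = merge_zeros ([0, 1] @ C' @ [1])"
    using cf_expansion_cf_eval[OF cf_valid_if_cf_pos] by (metis cf_eval_merge_zeros)
  moreover have "beta q (merge_zeros ([0, 1] @ C' @ [1])) = beta q ([0, 1] @ C' @ [1])"
    using beta_merge_zeros[OF L'(3,1)] \<open>even (length (merge_zeros _))\<close> by blast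
  ultimately show ?thesis
    using that \<open>s \<noteq> 0\<close> s by simp
qed

context
  fixes q :: real
  assumes q_pos: "0 < q" and q_less_1: "q < 1"
begin

lemma hom_value_beta_expansion_add_one:
  assumes v: "v = (1, 0) \<or> v = (1, 1 - q)"
  shows "hom_value (mat2_apply (beta q (cf_expansion (y + 1))) v) =
    q * hom_value (mat2_apply (beta q (cf_expansion y)) v) + 1"
proof -
  have nz: "snd (mat2_apply (beta q (cf_expansion y)) v) \<noteq> 0"
    using snd_beta_expansion_nonzero[OF q_pos q_less_1 v] .
  have eigen: "mat2_apply (sigma1_inv q) v = (\<mu> * fst v, \<mu> * snd v) \<and> \<mu> \<noteq> 0"
    if "\<mu> = (if v = (1, 0) then 1 else 1 / q)" for \<mu>
    using v that sigma1_inv_fixed_points[OF q_pos] q_pos by auto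
  consider "y = 0" | "y = -1" | a b rest where "cf_expansion y = a # b # rest" "y \<noteq> 0" "y \<noteq> -1"
    using cf_expansion_valid(1)[of y] by (cases "cf_expansion y" rule: remdups_adj.cases)
      (auto simp: cf_valid_def)
  then show ?thesis
  proof cases
    case 1
    have "cf_expansion 1 = [0, 1]"
      using cf_expansion_cf_eval[of "[0, 1]"] by (simp add: cf_valid_def)
    then show ?thesis
      using 1 v q_pos q_less_1
      by (auto simp: cf_expansion_def mat2_ipow_def mat2_id_def sigma1_def sigma2_def mat2_mult_def
          mat2_apply_def hom_value_def field_simps power2_eq_square)
  next
    case 2
    have "cf_expansion (-1) = [0, -1]"
      using cf_expansion_cf_eval[of "[0, -1]"] by (simp add: cf_valid_def)
    then show ?thesis
      using 2 v q_pos q_less_1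
      by (auto simp: cf_expansion_def mat2_ipow_def mat2_id_def mat2_adj_def sigma1_def sigma2_def
          mat2_mult_def mat2_apply_def hom_value_def field_simps power2_eq_square)
  next
    case 3
    show ?thesis
    proof (cases "0 < y \<or> y < 0 \<and> a \<le> -1")
      case True
      obtain s where "s \<noteq> 0"
        "beta q ((a + 1) # b # rest)
          = mat2_scale s (mat2_mult (sigma1_inv q) (beta q (a # b # rest)))"
        using beta_Cons_add_one[OF q_pos] .
      then show ?thesis
        using hom_value_conj_sigma1_inv[OF q_pos \<open>s \<noteq> 0\<close> one_neq_zero, of mat2_id v] nz
          cf_expansion_add_one_Cons[OF 3(1) True] 3(1) by simp
    next
      case False
      then have "y < 0" "a = 0"
        using 3 cf_expansion_neg[of y] by (auto simp: cf_pos_def)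
      moreover have "\<not> (b = -1 \<and> rest = [])"
        using 3 cf_expansion_valid(2)[of y] \<open>a = 0\<close> by auto
      ultimately obtain s where "s \<noteq> 0" "beta q (cf_expansion (y + 1)) =
          mat2_scale s
            (mat2_mult (sigma1_inv q) (mat2_mult (beta q (cf_expansion y)) (sigma1_inv q)))"
        using beta_expansion_add_one_between[OF q_pos] 3(1) by metis
      then show ?thesis
        using hom_value_conj_sigma1_inv[OF q_pos \<open>s \<noteq> 0\<close>] eigen nz by (metis (full_types))
    qed
  qed
qed

lemma qrat_sharp_add_nat:
  "qrat_sharp q (y + of_nat n) = q ^ n * qrat_sharp q y + (1 - q ^ n) / (1 - q)"
proof (induction n)
  case (Suc n)
  have "y + of_nat (Suc n) = (y + of_nat n) + 1"
    by simp
  then have "qrat_sharp q (y + of_nat (Suc n)) = q * qrat_sharp q (y + of_nat n) + 1"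
    using hom_value_beta_expansion_add_one[of "(1, 0)" "y + of_nat n"]
    by (simp only: qrat_sharp_eq) simp
  then show ?case
    using Suc q_less_1 by (simp add: field_simps)
qed simp

lemma qrat_flat_add_nat:
  "qrat_flat q (y + of_nat n) = q ^ n * qrat_flat q y + (1 - q ^ n) / (1 - q)"
proof (induction n)
  case (Suc n)
  have "y + of_nat (Suc n) = (y + of_nat n) + 1"
    by simp
  then have "qrat_flat q (y + of_nat (Suc n)) = q * qrat_flat q (y + of_nat n) + 1"
    using hom_value_beta_expansion_add_one[of "(1, 1 - q)" "y + of_nat n"]
    by (simp only: qrat_flat_def mat2_act_hom_eq) simp
  then show ?case
    using Suc q_less_1 by (simp add: field_simps)
qed simp

end

lemma tendsto_of_windows:
  fixes f g :: "'a \<Rightarrow> real"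
  assumes windows: "\<And>N. \<exists>a b. a < c \<and> c < b \<and> (\<forall>y. a < g y \<and> g y < b \<and> S y \<longrightarrow> \<bar>f y - L\<bar> \<le> \<epsilon> N)"
    and "\<epsilon> \<longlonglongrightarrow> 0" "(\<lambda>m. g (x m)) \<longlonglongrightarrow> c" "\<forall>m. S (x m)"
  shows "(\<lambda>m. f (x m)) \<longlonglongrightarrow> L"
proof (rule LIMSEQ_I)
  fix e :: real
  assume "0 < e"
  then obtain N where "norm (\<epsilon> N - 0) < e"
    using LIMSEQ_D[OF assms(2)] by (metis order_refl)
  then have "\<epsilon> N < e"
    by simp
  obtain a b where "a < c" "c < b" and window: "\<forall>y. a < g y \<and> g y < b \<and> S y \<longrightarrow> \<bar>f y - L\<bar> \<le> \<epsilon> N"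
    using windows by blast
  have "eventually (\<lambda>m. a < g (x m) \<and> g (x m) < b) sequentially"
    using order_tendstoD[OF assms(3)] \<open>a < c\<close> \<open>c < b\<close> by (simp add: eventually_conj_iff)
  then obtain M where "\<forall>m\<ge>M. a < g (x m) \<and> g (x m) < b"
    by (auto simp: eventually_sequentially)
  then show "\<exists>M. \<forall>m\<ge>M. norm (f (x m) - L) < e"
    using window assms(4) \<open>\<epsilon> N < e\<close> by (intro exI[of _ M]) force
qed

lemma common_limit_of_windows:
  fixes f g :: "'a \<Rightarrow> real"
  assumes windows: "\<And>N. \<exists>a b. a < c \<and> c < b \<and>
      (\<forall>y y'. a < g y \<and> g y < b \<and> a < g y' \<and> g y' < b \<longrightarrow> \<bar>f y - f y'\<bar> \<le> \<epsilon> N)"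
    and "\<epsilon> \<longlonglongrightarrow> 0"
  shows "\<exists>L. \<forall>x. (\<lambda>m. g (x m)) \<longlonglongrightarrow> c \<longrightarrow> (\<lambda>m. f (x m)) \<longlonglongrightarrow> L"
proof (cases "\<exists>x. (\<lambda>m. g (x m)) \<longlonglongrightarrow> c")
  case True
  have close: "\<exists>M. \<forall>m\<ge>M. \<forall>n\<ge>M. \<bar>f (x m) - f (x' n)\<bar> < e"
    if "(\<lambda>m. g (x m)) \<longlonglongrightarrow> c" "(\<lambda>m. g (x' m)) \<longlonglongrightarrow> c" "0 < e" for x x' e
  proof -
    obtain N where "norm (\<epsilon> N - 0) < e"
      using LIMSEQ_D[OF assms(2) \<open>0 < e\<close>] by (metis order_refl)
    then have "\<epsilon> N < e"
      by simp
    obtain a b where "a < c" "c < b" and window: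
      "\<forall>y y'. a < g y \<and> g y < b \<and> a < g y' \<and> g y' < b \<longrightarrow> \<bar>f y - f y'\<bar> \<le> \<epsilon> N"
      using windows by blast
    have "eventually (\<lambda>m. a < g (x m) \<and> g (x m) < b \<and> a < g (x' m) \<and> g (x' m) < b) sequentially"
      using order_tendstoD[OF that(1)] order_tendstoD[OF that(2)] \<open>a < c\<close> \<open>c < b\<close>
      by (simp add: eventually_conj_iff)
    then obtain M where "\<forall>m\<ge>M. a < g (x m) \<and> g (x m) < b \<and> a < g (x' m) \<and> g (x' m) < b"
      by (auto simp: eventually_sequentially)
    then show ?thesis
      using window \<open>\<epsilon> N < e\<close> by (intro exI[of _ M]) force
  qed
  obtain x0 where x0: "(\<lambda>m. g (x0 m)) \<longlonglongrightarrow> c"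
    using True by blast
  have "Cauchy (\<lambda>m. f (x0 m))"
    using close[OF x0 x0] by (intro metric_CauchyI) (simp add: dist_real_def)
  then obtain L where L: "(\<lambda>m. f (x0 m)) \<longlonglongrightarrow> L"
    by (auto simp: Cauchy_convergent_iff convergent_def)
  have "(\<lambda>m. f (x m)) \<longlonglongrightarrow> L" if x: "(\<lambda>m. g (x m)) \<longlonglongrightarrow> c" for x
  proof -
    have "(\<lambda>m. f (x m) - f (x0 m)) \<longlonglongrightarrow> 0"
      using close[OF x x0] by (intro LIMSEQ_I) fastforce
    from tendsto_add[OF this L] show ?thesis
      by simp
  qed
  then show ?thesis
    by blast
qed simp

lemma tendsto_affine_cancel:
  fixes f :: "'a \<Rightarrow> real"
  assumes "a \<noteq> 0" "((\<lambda>m. a * f m + b) \<longlongrightarrow> a * L + b) F"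
  shows "(f \<longlongrightarrow> L) F"
proof -
  have "((\<lambda>m. (a * f m + b - b) / a) \<longlongrightarrow> (a * L + b - b) / a) F"
    by (intro tendsto_intros assms)
  then show ?thesis
    using assms(1) by simp
qed

context
  fixes q :: real
  assumes q_pos: "0 < q" and q_less_1: "q < 1"
begin

lemma qrat_sharp_right_limit_pos:
  assumes "0 < r" "(\<lambda>m. real_of_rat (x m)) \<longlonglongrightarrow> real_of_rat r" "\<forall>m. r < x m"
  shows "(\<lambda>m. qrat_sharp q (x m)) \<longlonglongrightarrow> qrat_sharp q r"
proof (rule tendsto_of_windows[where \<epsilon> = "\<lambda>N. q ^ N" and S = "\<lambda>y. r < y"])
  fix N
  obtain b where "real_of_rat r < b"
    "\<And>y. r < y \<Longrightarrow> real_of_rat y < b \<Longrightarrow> \<bar>qrat_sharp q y - qrat_sharp q r\<bar> \<le> q ^ N"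
    using qrat_sharp_right_window[OF q_pos q_less_1 assms(1)] by metis
  then show "\<exists>a b. a < real_of_rat r \<and> real_of_rat r < b \<and>
      (\<forall>y. a < real_of_rat y \<and> real_of_rat y < b \<and> r < y \<longrightarrow> \<bar>qrat_sharp q y - qrat_sharp q r\<bar>
        \<le> q ^ N)"
    by (intro exI[of _ "real_of_rat r - 1"] exI[of _ b]) auto
next
  show "(\<lambda>N. q ^ N) \<longlonglongrightarrow> 0"
    using q_pos q_less_1 by (intro LIMSEQ_power_zero) auto
qed (use assms in auto)

lemma qrat_sharp_left_limit_pos:
  assumes "0 < r" "(\<lambda>m. real_of_rat (x m)) \<longlonglongrightarrow> real_of_rat r" "\<forall>m. x m < r"
  shows "(\<lambda>m. qrat_sharp q (x m)) \<longlonglongrightarrow> qrat_flat q r"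
proof (rule tendsto_of_windows[where \<epsilon> = "\<lambda>N. q ^ N / (1 - q)" and S = "\<lambda>y. y < r"])
  fix N
  obtain a where "a < real_of_rat r"
    "\<And>y. a < real_of_rat y \<Longrightarrow> y < r \<Longrightarrow> \<bar>qrat_sharp q y - qrat_flat q r\<bar> \<le> q ^ N / (1 - q)"
    using qrat_sharp_left_window[OF q_pos q_less_1 assms(1)] by metis
  then show "\<exists>a b. a < real_of_rat r \<and> real_of_rat r < b \<and>
      (\<forall>y. a < real_of_rat y \<and> real_of_rat y < b \<and> y < r \<longrightarrow> \<bar>qrat_sharp q y - qrat_flat q r\<bar>
        \<le> q ^ N / (1 - q))"
    by (intro exI[of _ a] exI[of _ "real_of_rat r + 1"]) auto
next
  show "(\<lambda>N. q ^ N / (1 - q)) \<longlonglongrightarrow> 0"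
    using q_pos q_less_1 by (intro tendsto_divide_zero LIMSEQ_power_zero) auto
qed (use assms in auto)

lemma qrat_sharp_irrational_limit_pos:
  assumes "0 < t" "t \<notin> \<rat>"
  shows "\<exists>L. \<forall>x. (\<lambda>m. real_of_rat (x m)) \<longlonglongrightarrow> t \<longrightarrow> (\<lambda>m. qrat_sharp q (x m)) \<longlonglongrightarrow> L"
proof (rule common_limit_of_windows[where \<epsilon> = "\<lambda>N. q ^ N / (1 - q)"])
  fix N
  obtain a b where "a < t" "t < b"
    "\<And>y y'. a < real_of_rat y \<Longrightarrow> real_of_rat y < b \<Longrightarrow> a < real_of_rat y' \<Longrightarrow> real_of_rat y' < b \<Longrightarrow>
      \<bar>qrat_sharp q y - qrat_sharp q y'\<bar> \<le> q ^ N / (1 - q)"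
    using qrat_sharp_irrational_window[OF q_pos q_less_1 assms] by metis
  then show "\<exists>a b. a < t \<and> t < b \<and> (\<forall>y y'. a < real_of_rat y \<and> real_of_rat y < b \<and>
      a < real_of_rat y' \<and> real_of_rat y' < b \<longrightarrow> \<bar>qrat_sharp q y - qrat_sharp q y'\<bar>
        \<le> q ^ N / (1 - q))"
    by blast
next
  show "(\<lambda>N. q ^ N / (1 - q)) \<longlonglongrightarrow> 0"
    using q_pos q_less_1 by (intro tendsto_divide_zero LIMSEQ_power_zero) auto
qed

lemma qrat_sharp_right_limit:
  assumes "(\<lambda>m. real_of_rat (x m)) \<longlonglongrightarrow> real_of_rat r" "\<forall>m. r < x m"
  shows "(\<lambda>m. qrat_sharp q (x m)) \<longlonglongrightarrow> qrat_sharp q r"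
proof -
  obtain n :: nat where "- r < of_nat n"
    using reals_Archimedean2 by blast
  have "(\<lambda>m. real_of_rat (x m + of_nat n)) \<longlonglongrightarrow> real_of_rat (r + of_nat n)"
    using tendsto_add[OF assms(1) tendsto_const[of "real n"]] by (simp add: of_rat_add)
  then have "(\<lambda>m. qrat_sharp q (x m + of_nat n)) \<longlonglongrightarrow> qrat_sharp q (r + of_nat n)"
    using qrat_sharp_right_limit_pos assms(2) \<open>- r < of_nat n\<close> by simp
  then have "(\<lambda>m. q ^ n * qrat_sharp q (x m) + (1 - q ^ n) / (1 - q)) \<longlonglongrightarrow>
      q ^ n * qrat_sharp q r + (1 - q ^ n) / (1 - q)"
    by (simp only: qrat_sharp_add_nat[OF q_pos q_less_1])
  then show ?thesis
    by (rule tendsto_affine_cancel[rotated]) (use q_pos in simp)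
qed

lemma qrat_sharp_left_limit:
  assumes "(\<lambda>m. real_of_rat (x m)) \<longlonglongrightarrow> real_of_rat r" "\<forall>m. x m < r"
  shows "(\<lambda>m. qrat_sharp q (x m)) \<longlonglongrightarrow> qrat_flat q r"
proof -
  obtain n :: nat where "- r < of_nat n"
    using reals_Archimedean2 by blast
  have "(\<lambda>m. real_of_rat (x m + of_nat n)) \<longlonglongrightarrow> real_of_rat (r + of_nat n)"
    using tendsto_add[OF assms(1) tendsto_const[of "real n"]] by (simp add: of_rat_add)
  then have "(\<lambda>m. qrat_sharp q (x m + of_nat n)) \<longlonglongrightarrow> qrat_flat q (r + of_nat n)"
    using qrat_sharp_left_limit_pos assms(2) \<open>- r < of_nat n\<close> by simp
  then have "(\<lambda>m. q ^ n * qrat_sharp q (x m) + (1 - q ^ n) / (1 - q)) \<longlonglongrightarrow>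
      q ^ n * qrat_flat q r + (1 - q ^ n) / (1 - q)"
    by (simp only: qrat_sharp_add_nat[OF q_pos q_less_1] qrat_flat_add_nat[OF q_pos q_less_1])
  then show ?thesis
    by (rule tendsto_affine_cancel[rotated]) (use q_pos in simp)
qed

lemma qrat_sharp_irrational_limit:
  assumes "t \<notin> \<rat>"
  shows "\<exists>L. \<forall>x. (\<lambda>m. real_of_rat (x m)) \<longlonglongrightarrow> t \<longrightarrow> (\<lambda>m. qrat_sharp q (x m)) \<longlonglongrightarrow> L"
proof -
  obtain n :: nat where "- t < of_nat n"
    using reals_Archimedean2 by blast
  moreover have "t + of_nat n \<notin> \<rat>"
    using assms Rats_diff[of "t + of_nat n" "of_nat n"] by auto
  ultimately obtain L where L: "\<And>x. (\<lambda>m. real_of_rat (x m)) \<longlonglongrightarrow> t + of_nat n \<Longrightarrow>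
      (\<lambda>m. qrat_sharp q (x m)) \<longlonglongrightarrow> L"
    using qrat_sharp_irrational_limit_pos[of "t + of_nat n"] by auto
  have "(\<lambda>m. qrat_sharp q (x m)) \<longlonglongrightarrow> (L - (1 - q ^ n) / (1 - q)) / q ^ n"
    if "(\<lambda>m. real_of_rat (x m)) \<longlonglongrightarrow> t" for x
  proof -
    have "(\<lambda>m. real_of_rat (x m + of_nat n)) \<longlonglongrightarrow> t + of_nat n"
      using tendsto_add[OF that tendsto_const[of "real n"]] by (simp add: of_rat_add)
    then have "(\<lambda>m. qrat_sharp q (x m + of_nat n)) \<longlonglongrightarrow> L"
      by (rule L)
    then have "(\<lambda>m. q ^ n * qrat_sharp q (x m) + (1 - q ^ n) / (1 - q)) \<longlonglongrightarrow>
        q ^ n * ((L - (1 - q ^ n) / (1 - q)) / q ^ n) + (1 - q ^ n) / (1 - q)"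
      using q_pos by (simp add: qrat_sharp_add_nat[OF q_pos q_less_1])
    then show ?thesis
      by (rule tendsto_affine_cancel[rotated]) (use q_pos in simp)
  qed
  then show ?thesis
    by blast
qed

end

theorem theorem2p11:
  fixes q :: real
  assumes "0 < q" and "q < 1"
  shows
    "(\<forall>t::real. t \<notin> \<rat> \<longrightarrow>
        (\<exists>L::real. \<forall>x::nat \<Rightarrow> rat.
            (\<lambda>m. real_of_rat (x m)) \<longlonglongrightarrow> t \<longrightarrow>
            (\<lambda>m. qrat_sharp q (x m)) \<longlonglongrightarrow> L))
   \<and> (\<forall>(r::rat) (x::nat \<Rightarrow> rat).
        (\<lambda>m. real_of_rat (x m)) \<longlonglongrightarrow> real_of_rat r \<longrightarrow> (\<forall>m. x m > r) \<longrightarrow>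
        (\<lambda>m. qrat_sharp q (x m)) \<longlonglongrightarrow> qrat_sharp q r)
   \<and> (\<forall>(r::rat) (x::nat \<Rightarrow> rat).
        (\<lambda>m. real_of_rat (x m)) \<longlonglongrightarrow> real_of_rat r \<longrightarrow> (\<forall>m. x m < r) \<longrightarrow>
        (\<lambda>m. qrat_sharp q (x m)) \<longlonglongrightarrow> qrat_flat q r)"
  using qrat_sharp_irrational_limit[OF assms] qrat_sharp_right_limit[OF assms]
    qrat_sharp_left_limit[OF assms]
  by blast

end
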